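(* Let $(W,S)$ be a Coxeter system with $S$ finite. Let $t_1,\dots,t_m\in S$ with $m(t_{i-1},t_i)=\infty$ for $2\le i\le m$. Set $J=S\setminus\{t_1,\dots,t_m\}$ and $\tilde W_i = W_{J\cup\{t_i\}}\setminus W_J$ (set difference). If $w\in\tilde W_1\tilde W_2\cdots\tilde W_m$, then every reduced decomposition of $w$ is of the form $\tilde w_1\cdots\tilde w_m$, i.e. it is a concatenation of $m$ subwords such that the $i$-th subword represents an element of $\tilde W_i$. In particular $\ell(w)\ge m$.
   Context: $m(s,t)$ denotes the order of $st$ in $W$ (possibly $\infty$); for $J\subseteq S$, $W_J=\langle J\rangle$; $\ell$ is the word length with respect to $S$; a reduced decomposition of $w$ is a word in $S$ of length $\ell(w)$ representing $w$. *)

theory Defs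
  imports "HOL-Algebra.Algebra"
begin

text \<open>Coxeter systems, stated via HOL-Algebra groups.  The order m(s,t) of st is
  group.ord G (s * t), which is 0 exactly when st has infinite order (m = infinity).\<close>

definition coxeter_m :: "('a, 'b) monoid_scheme \<Rightarrow> 'a \<Rightarrow> 'a \<Rightarrow> nat" where
  "coxeter_m G s t = group.ord G (s \<otimes>\<^bsub>G\<^esub> t)"

text \<open>The test groups H are taken
  with carrier in nat; this suffices when S is finite (the presented group is countable).\<close>

definition coxeter_system :: "('a, 'b) monoid_scheme \<Rightarrow> 'a set \<Rightarrow> bool" where
  "coxeter_system G S \<longleftrightarrow>
     group G \<and> S \<subseteq> carrier G \<and> generate G S = carrier G \<and>
     (\<forall>s\<in>S. s \<noteq> \<one>\<^bsub>G\<^esub> \<and> s \<otimes>\<^bsub>G\<^esub> s = \<one>\<^bsub>G\<^esub>) \<and>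
     (\<forall>(H :: nat monoid) f. group H \<and> f \<in> S \<rightarrow> carrier H \<and>
        (\<forall>s\<in>S. f s \<otimes>\<^bsub>H\<^esub> f s = \<one>\<^bsub>H\<^esub>) \<and>
        (\<forall>s\<in>S. \<forall>t\<in>S. coxeter_m G s t \<noteq> 0 \<longrightarrow>
            (f s \<otimes>\<^bsub>H\<^esub> f t) [^]\<^bsub>H\<^esub> coxeter_m G s t = \<one>\<^bsub>H\<^esub>)
      \<longrightarrow> (\<exists>h \<in> hom G H. \<forall>s\<in>S. h s = f s))"

definition word_prod :: "('a, 'b) monoid_scheme \<Rightarrow> 'a list \<Rightarrow> 'a" where
  "word_prod G ws = foldr (\<lambda>x y. x \<otimes>\<^bsub>G\<^esub> y) ws \<one>\<^bsub>G\<^esub>"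

definition word_length :: "('a, 'b) monoid_scheme \<Rightarrow> 'a set \<Rightarrow> 'a \<Rightarrow> nat" where
  "word_length G S w = (LEAST n. \<exists>ws. length ws = n \<and> set ws \<subseteq> S \<and> word_prod G ws = w)"

definition reduced_decomposition :: "('a, 'b) monoid_scheme \<Rightarrow> 'a set \<Rightarrow> 'a \<Rightarrow> 'a list \<Rightarrow> bool" where
  "reduced_decomposition G S w ws \<longleftrightarrow>
     set ws \<subseteq> S \<and> word_prod G ws = w \<and> length ws = word_length G S w"

definition parabolic :: "('a, 'b) monoid_scheme \<Rightarrow> 'a set \<Rightarrow> 'a set" where
  "parabolic G J = generate G J"

end

theory Submission
  imports Defs "HOL-Library.Countable_Set"
begin

text \<open>The combinatorics of reduced words is derived from the reflection cocycle: the set of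
  reflections occurring an odd number of times in the reflection sequence of a word respects
  the Coxeter relations, so it depends only on the element represented (this is where the
  presentation of \<open>W\<close> enters). Hence a word is reduced iff its reflection sequence has no
  repetition, which gives the exchange and deletion conditions, that reduced words of elements of
  \<open>W\<^sub>J\<close> only use letters of \<open>J\<close>, and that \<open>len (ab) = len a + len b\<close> when \<open>a\<close> is minimal in
  \<open>aW\<^sub>K\<close> and \<open>b \<in> W\<^sub>K\<close>.

  The theorem is proved by induction on \<open>m\<close> and, for fixed \<open>m\<close>, on \<open>len w\<close>. Let \<open>K = J \<union> {t\<^sub>m}\<close> and
  write \<open>w = ab\<close> with \<open>a\<close> minimal in \<open>wW\<^sub>K\<close>. Then \<open>b \<noteq> 1\<close>, so some \<open>s \<in> K\<close> is a right descent of \<open>w\<close>.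
  Let \<open>y\<close> be the last letter of a reduced word of \<open>w\<close>. If \<open>y \<in> K\<close>, removing it reduces to a
  shorter element of \<open>W\<^sub>1 \<cdots> W\<^sub>m\<close> (or, if \<open>y = t\<^sub>m\<close>, possibly of \<open>W\<^sub>1 \<cdots> W\<^sub>m\<^sub>-\<^sub>1\<close>). Otherwise \<open>y\<close> and \<open>s\<close>
  are two right descents of \<open>w\<close>, so \<open>m(y, s) < \<infinity>\<close> and \<open>ws\<close> has a reduced word ending in \<open>y\<close>; by
  induction such a word ends in a letter of \<open>K\<close> or in \<open>t\<^sub>m\<^sub>-\<^sub>1\<close>, and \<open>m(t\<^sub>m\<^sub>-\<^sub>1, t\<^sub>m) = \<infinity>\<close> excludes
  both.\<close>

lemma count_list_distinct: "distinct xs \<Longrightarrow> count_list xs r = (if r \<in> set xs then 1 else 0)"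
  by (induction xs) auto

lemma append_eq_append_Cons_cases:
  "xs @ y # zs = as @ bs \<Longrightarrow>
     (\<exists>ds. as = xs @ y # ds \<and> zs = ds @ bs) \<or> (\<exists>es. xs = as @ es \<and> bs = es @ y # zs)"
  by (auto simp: append_eq_append_conv2 Cons_eq_append_conv)

lemma length_le_length_concat: "[] \<notin> set xss \<Longrightarrow> length xss \<le> length (concat xss)"
proof (induction xss)
  case (Cons xs xss)
  then show ?case by (cases xs) auto
qed simp

fun alternating :: "'a \<Rightarrow> 'a \<Rightarrow> nat \<Rightarrow> 'a list" where
  "alternating y s 0 = []"
| "alternating y s (Suc n) = alternating s y n @ [s]"

lemma alternating_even_odd:
  "alternating y s (2 * n) = concat (replicate n [y, s]) \<and>
   alternating y s (Suc (2 * n)) = s # concat (replicate n [y, s])"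
proof (induction n arbitrary: y s)
  case (Suc n)
  have shift: "concat (replicate m [a, b]) @ [a] = a # concat (replicate m [b, a])" for m and a b :: 'a
    by (induction m) auto
  have even: "alternating a b (2 * Suc n) = concat (replicate (Suc n) [a, b])" for a b :: 'a
  proof -
    have "alternating a b (2 * Suc n) = alternating b a (Suc (2 * n)) @ [b]"
      by (simp add: numeral_2_eq_2)
    also have "\<dots> = concat (replicate (Suc n) [a, b])"
      using Suc.IH[of b a] shift[of n b a] by simp
    finally show ?thesis .
  qed
  have "alternating y s (Suc (2 * Suc n)) = concat (replicate (Suc n) [s, y]) @ [s]"
    using even[of s y] by simp
  then show ?case using even[of y s] shift[of "Suc n" s y] by simp
qed simp

lemma (in group) conj_eq_iff:
  "g \<in> carrier G \<Longrightarrow> h \<in> carrier G \<Longrightarrow> k \<in> carrier G \<Longrightarrow>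
     inv g \<otimes> h \<otimes> g = k \<longleftrightarrow> h \<otimes> g = g \<otimes> k"
  by (metis inv_closed m_assoc m_closed inv_solve_left)

lemma (in group_hom) hom_word_prod:
  "set xs \<subseteq> carrier G \<Longrightarrow> h (word_prod G xs) = word_prod H (map h xs)"
  by (induction xs) (simp_all add: word_prod_def)

lemma (in monoid) word_prod_replicate_pair:
  assumes "a \<in> carrier G" "b \<in> carrier G"
  shows "word_prod G (concat (replicate k [a, b])) = (a \<otimes> b) [^] k"
proof (induction k)
  case (Suc k)
  then have "word_prod G (concat (replicate (Suc k) [a, b])) = (a \<otimes> b) \<otimes> (a \<otimes> b) [^] k"
    using assms by (simp add: word_prod_def m_assoc)
  then show ?case using assms by (metis m_closed nat_pow_Suc2)
qed (simp add: word_prod_def)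

section \<open>Countable groups and the reflection cocycle group\<close>

definition nat_copy :: "('c, 'd) monoid_scheme \<Rightarrow> nat monoid" where
  "nat_copy H = \<lparr>carrier = to_nat_on (carrier H) ` carrier H,
     monoid.mult = (\<lambda>a b. to_nat_on (carrier H)
        (from_nat_into (carrier H) a \<otimes>\<^bsub>H\<^esub> from_nat_into (carrier H) b)),
     one = to_nat_on (carrier H) \<one>\<^bsub>H\<^esub>\<rparr>"

lemma group_nat_copy:
  assumes H: "group H" and c: "countable (carrier H)"
  shows "group (nat_copy H)"
proof -
  interpret H: group H by fact
  let ?e = "to_nat_on (carrier H)" and ?d = "from_nat_into (carrier H)"
  have de: "\<And>x. x \<in> carrier H \<Longrightarrow> ?d (?e x) = x" using c by simp
  show ?thesis
  proof (rule groupI)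
    fix x y assume "x \<in> carrier (nat_copy H)" "y \<in> carrier (nat_copy H)"
    then show "x \<otimes>\<^bsub>nat_copy H\<^esub> y \<in> carrier (nat_copy H)"
      by (auto simp: nat_copy_def de)
  next
    show "\<one>\<^bsub>nat_copy H\<^esub> \<in> carrier (nat_copy H)" by (auto simp: nat_copy_def)
  next
    fix x y z
    assume "x \<in> carrier (nat_copy H)" "y \<in> carrier (nat_copy H)" "z \<in> carrier (nat_copy H)"
    then show "x \<otimes>\<^bsub>nat_copy H\<^esub> y \<otimes>\<^bsub>nat_copy H\<^esub> z = x \<otimes>\<^bsub>nat_copy H\<^esub> (y \<otimes>\<^bsub>nat_copy H\<^esub> z)"
      by (auto simp: nat_copy_def de H.m_assoc)
  next
    fix x assume "x \<in> carrier (nat_copy H)"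
    then show "\<one>\<^bsub>nat_copy H\<^esub> \<otimes>\<^bsub>nat_copy H\<^esub> x = x"
      by (auto simp: nat_copy_def de)
  next
    fix x assume "x \<in> carrier (nat_copy H)"
    then obtain a where a: "a \<in> carrier H" "x = ?e a" by (auto simp: nat_copy_def)
    show "\<exists>y\<in>carrier (nat_copy H). y \<otimes>\<^bsub>nat_copy H\<^esub> x = \<one>\<^bsub>nat_copy H\<^esub>"
      by (rule bexI[of _ "?e (inv\<^bsub>H\<^esub> a)"]) (auto simp: nat_copy_def de a)
  qed
qed

lemma to_nat_on_hom_nat_copy:
  assumes "group H" "countable (carrier H)"
  shows "to_nat_on (carrier H) \<in> hom H (nat_copy H)"
proof -
  interpret group H by fact
  show ?thesis using assms(2) by (auto simp: hom_def nat_copy_def)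
qed

lemma from_nat_into_hom_nat_copy:
  assumes "group H" "countable (carrier H)"
  shows "from_nat_into (carrier H) \<in> hom (nat_copy H) H"
proof -
  interpret group H by fact
  show ?thesis using assms(2) by (auto simp: hom_def nat_copy_def)
qed

text \<open>\<open>G\<close> acting by conjugation on its finite subsets, these forming a group under
  symmetric difference: the second component of \<open>(g, A) (h, B)\<close> is \<open>B \<triangle> h\<inverse>Ah\<close>.\<close>

definition cocycle_group :: "('a, 'b) monoid_scheme \<Rightarrow> ('a \<times> 'a set) monoid" where
  "cocycle_group G = \<lparr>carrier = {(g, A). g \<in> carrier G \<and> A \<subseteq> carrier G \<and> finite A},
     monoid.mult = (\<lambda>x y. (fst x \<otimes>\<^bsub>G\<^esub> fst y,
        {r \<in> carrier G. (r \<in> snd y) \<noteq> (fst y \<otimes>\<^bsub>G\<^esub> r \<otimes>\<^bsub>G\<^esub> inv\<^bsub>G\<^esub> (fst y) \<in> snd x)})),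
     one = (\<one>\<^bsub>G\<^esub>, {})\<rparr>"

context group
begin

lemma cocycle_group_mult:
  "x \<otimes>\<^bsub>cocycle_group G\<^esub> y =
     (fst x \<otimes> fst y, {r \<in> carrier G. (r \<in> snd y) \<noteq> (fst y \<otimes> r \<otimes> inv (fst y) \<in> snd x)})"
  by (simp add: cocycle_group_def)

lemma cocycle_group_one: "\<one>\<^bsub>cocycle_group G\<^esub> = (\<one>, {})"
  by (simp add: cocycle_group_def)

lemma cocycle_group_carrier:
  "carrier (cocycle_group G) = {(g, A). g \<in> carrier G \<and> A \<subseteq> carrier G \<and> finite A}"
  by (simp add: cocycle_group_def)

lemma finite_cocycle_group_mult:
  assumes h: "h \<in> carrier G" and "finite A" "finite B"
  shows "finite {r \<in> carrier G. (r \<in> B) \<noteq> (h \<otimes> r \<otimes> inv h \<in> A)}"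
proof (rule finite_subset)
  show "{r \<in> carrier G. (r \<in> B) \<noteq> (h \<otimes> r \<otimes> inv h \<in> A)} \<subseteq> B \<union> (\<lambda>a. inv h \<otimes> a \<otimes> h) ` A"
  proof clarify
    fix r assume r: "r \<in> carrier G" "h \<otimes> r \<otimes> inv h \<in> A" "r \<notin> (\<lambda>a. inv h \<otimes> a \<otimes> h) ` A"
    have "r = inv h \<otimes> (h \<otimes> r \<otimes> inv h) \<otimes> h" using r h
      by (simp add: m_assoc flip: m_assoc[of "inv h"])
    then show "r \<in> B" using r by blast
  qed
  show "finite (B \<union> (\<lambda>a. inv h \<otimes> a \<otimes> h) ` A)" using assms by simp
qed

lemma group_cocycle_group: "group (cocycle_group G)"
proof (rule groupI)
  fix x y assume x: "x \<in> carrier (cocycle_group G)" and y: "y \<in> carrier (cocycle_group G)"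
  obtain g A h B where gA: "x = (g, A)" and hB: "y = (h, B)" by fastforce
  have g: "g \<in> carrier G" "A \<subseteq> carrier G" "finite A"
    and h: "h \<in> carrier G" "B \<subseteq> carrier G" "finite B"
    using x y gA hB by (auto simp: cocycle_group_carrier)
  then have "finite {r \<in> carrier G. (r \<in> B) \<noteq> (h \<otimes> r \<otimes> inv h \<in> A)}"
    by (intro finite_cocycle_group_mult)
  then show "x \<otimes>\<^bsub>cocycle_group G\<^esub> y \<in> carrier (cocycle_group G)"
    using g h by (auto simp: cocycle_group_mult cocycle_group_carrier gA hB)
next
  show "\<one>\<^bsub>cocycle_group G\<^esub> \<in> carrier (cocycle_group G)"
    by (simp add: cocycle_group_one cocycle_group_carrier)
next
  fix x y z assume "x \<in> carrier (cocycle_group G)" "y \<in> carrier (cocycle_group G)"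
    "z \<in> carrier (cocycle_group G)"
  then show "x \<otimes>\<^bsub>cocycle_group G\<^esub> y \<otimes>\<^bsub>cocycle_group G\<^esub> z =
      x \<otimes>\<^bsub>cocycle_group G\<^esub> (y \<otimes>\<^bsub>cocycle_group G\<^esub> z)"
    by (auto simp: cocycle_group_mult cocycle_group_carrier m_assoc inv_mult_group)
next
  fix x assume "x \<in> carrier (cocycle_group G)"
  then show "\<one>\<^bsub>cocycle_group G\<^esub> \<otimes>\<^bsub>cocycle_group G\<^esub> x = x"
    by (auto simp: cocycle_group_mult cocycle_group_one cocycle_group_carrier)
next
  fix x assume x: "x \<in> carrier (cocycle_group G)"
  obtain g A where gA: "x = (g, A)" by fastforce
  have g: "g \<in> carrier G" "A \<subseteq> carrier G" "finite A"
    using x gA by (auto simp: cocycle_group_carrier)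
  let ?Y = "(\<lambda>r. g \<otimes> r \<otimes> inv g) ` A"
  have "\<And>r a. r \<in> carrier G \<Longrightarrow> a \<in> carrier G \<Longrightarrow> g \<otimes> r \<otimes> inv g = g \<otimes> a \<otimes> inv g \<Longrightarrow> r = a"
    using g by (metis inv_closed m_closed l_cancel r_cancel)
  then have "{r \<in> carrier G. (r \<in> A) \<noteq> (g \<otimes> r \<otimes> inv g \<in> ?Y)} = {}"
    using g by blast
  then have "(inv g, ?Y) \<otimes>\<^bsub>cocycle_group G\<^esub> x = \<one>\<^bsub>cocycle_group G\<^esub>"
    using g by (simp add: cocycle_group_mult cocycle_group_one gA)
  moreover have "(inv g, ?Y) \<in> carrier (cocycle_group G)"
    using g by (auto simp: cocycle_group_carrier)
  ultimately show "\<exists>y\<in>carrier (cocycle_group G). y \<otimes>\<^bsub>cocycle_group G\<^esub> x = \<one>\<^bsub>cocycle_group G\<^esub>"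
    by blast
qed

lemma countable_cocycle_group_carrier:
  assumes "countable (carrier G)"
  shows "countable (carrier (cocycle_group G))"
proof (rule countable_subset)
  show "carrier (cocycle_group G) \<subseteq> carrier G \<times> {A. finite A \<and> A \<subseteq> carrier G}"
    by (auto simp: cocycle_group_carrier)
  show "countable (carrier G \<times> {A. finite A \<and> A \<subseteq> carrier G})"
    using assms by (simp add: countable_Collect_finite_subset)
qed

end

text \<open>For a word \<open>s\<^sub>1 \<cdots> s\<^sub>n\<close> the \<open>i\<close>-th entry is \<open>r\<^sub>i = (s\<^sub>i\<^sub>+\<^sub>1 \<cdots> s\<^sub>n)\<inverse> s\<^sub>i (s\<^sub>i\<^sub>+\<^sub>1 \<cdots> s\<^sub>n)\<close>,
  the element with \<open>s\<^sub>1 \<cdots> s\<^sub>n r\<^sub>i = s\<^sub>1 \<cdots> s\<^sub>i\<^sub>-\<^sub>1 s\<^sub>i\<^sub>+\<^sub>1 \<cdots> s\<^sub>n\<close>.\<close>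

primrec reflection_seq :: "('a, 'b) monoid_scheme \<Rightarrow> 'a list \<Rightarrow> 'a list" where
  "reflection_seq G [] = []"
| "reflection_seq G (x # xs) =
     (inv\<^bsub>G\<^esub> (word_prod G xs) \<otimes>\<^bsub>G\<^esub> x \<otimes>\<^bsub>G\<^esub> word_prod G xs) # reflection_seq G xs"

definition odd_reflections :: "('a, 'b) monoid_scheme \<Rightarrow> 'a list \<Rightarrow> 'a set" where
  "odd_reflections G ws = {r. odd (count_list (reflection_seq G ws) r)}"

lemma length_reflection_seq [simp]: "length (reflection_seq G xs) = length xs"
  by (induction xs) auto

section \<open>Coxeter systems\<close>

text \<open>Finiteness of \<open>S\<close> is only used to make \<open>W\<close> countable: the universal property in
  \<open>coxeter_system\<close> is stated for groups with carrier in \<open>nat\<close>.\<close>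

locale coxeter = group G for G :: "('a, 'b) monoid_scheme" (structure) +
  fixes S :: "'a set"
  assumes coxeter_system: "coxeter_system G S"
    and finite_gens: "finite S"
begin

lemma gens_subset_carrier: "S \<subseteq> carrier G"
  using coxeter_system by (simp add: coxeter_system_def)

lemma gen_closed [intro, simp]: "s \<in> S \<Longrightarrow> s \<in> carrier G"
  using gens_subset_carrier by blast

lemma gen_square: "s \<in> S \<Longrightarrow> s \<otimes> s = \<one>"
  using coxeter_system by (simp add: coxeter_system_def)

lemma gen_neq_one: "s \<in> S \<Longrightarrow> s \<noteq> \<one>"
  using coxeter_system by (simp add: coxeter_system_def)

lemma inv_gen: "s \<in> S \<Longrightarrow> inv s = s"
  using gen_square by (metis gen_closed inv_equality)

lemma gen_cancel_left: "s \<in> S \<Longrightarrow> z \<in> carrier G \<Longrightarrow> s \<otimes> (s \<otimes> z) = z"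
  using gen_square by (simp flip: m_assoc)

lemma gen_cancel_right: "s \<in> S \<Longrightarrow> z \<in> carrier G \<Longrightarrow> z \<otimes> s \<otimes> s = z"
  using gen_square by (simp add: m_assoc)

lemma coxeter_m_self: "s \<in> S \<Longrightarrow> coxeter_m G s s \<noteq> 0"
  using gen_square by (simp add: coxeter_m_def)

lemma word_prod_Nil [simp]: "word_prod G [] = \<one>"
  by (simp add: word_prod_def)

lemma word_prod_Cons [simp]: "word_prod G (x # xs) = x \<otimes> word_prod G xs"
  by (simp add: word_prod_def)

lemma word_prod_closed [intro, simp]: "set xs \<subseteq> carrier G \<Longrightarrow> word_prod G xs \<in> carrier G"
  by (induction xs) auto

lemma word_prod_closed_gens [intro, simp]: "set xs \<subseteq> S \<Longrightarrow> word_prod G xs \<in> carrier G"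
  using gens_subset_carrier by auto

lemma word_prod_append:
  "set xs \<subseteq> carrier G \<Longrightarrow> set ys \<subseteq> carrier G \<Longrightarrow>
     word_prod G (xs @ ys) = word_prod G xs \<otimes> word_prod G ys"
  by (induction xs) (auto simp: m_assoc)

lemma word_prod_append_gens:
  "set xs \<subseteq> S \<Longrightarrow> set ys \<subseteq> S \<Longrightarrow> word_prod G (xs @ ys) = word_prod G xs \<otimes> word_prod G ys"
  using word_prod_append gens_subset_carrier by auto

lemma word_prod_snoc: "set xs \<subseteq> S \<Longrightarrow> s \<in> S \<Longrightarrow> word_prod G (xs @ [s]) = word_prod G xs \<otimes> s"
  using word_prod_append_gens[of xs "[s]"] by simp

lemma parabolic_eq_words: "J \<subseteq> S \<Longrightarrow> parabolic G J = {word_prod G ws | ws. set ws \<subseteq> J}"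
proof
  assume J: "J \<subseteq> S"
  show "parabolic G J \<subseteq> {word_prod G ws | ws. set ws \<subseteq> J}"
  proof
    fix x assume "x \<in> parabolic G J"
    then show "x \<in> {word_prod G ws | ws. set ws \<subseteq> J}"
      unfolding parabolic_def
    proof induction
      case one then show ?case by (auto intro!: exI[of _ "[]"])
    next
      case (incl h) then show ?case using J by (auto intro!: exI[of _ "[h]"])
    next
      case (inv h) then show ?case using J inv_gen by (auto intro!: exI[of _ "[h]"])
    next
      case (eng h1 h2)
      then obtain w1 w2 where "set w1 \<subseteq> J" "h1 = word_prod G w1" "set w2 \<subseteq> J" "h2 = word_prod G w2"
        by auto
      then show ?case using J by (auto intro!: exI[of _ "w1 @ w2"] simp: word_prod_append_gens)
    qed
  qed
  show "{word_prod G ws | ws. set ws \<subseteq> J} \<subseteq> parabolic G J"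
  proof clarify
    fix ws assume "set ws \<subseteq> J"
    then show "word_prod G ws \<in> parabolic G J"
      unfolding parabolic_def by (induction ws) (auto intro: generate.intros)
  qed
qed

lemma carrier_eq_words: "carrier G = {word_prod G ws | ws. set ws \<subseteq> S}"
  using parabolic_eq_words[of S] coxeter_system by (simp add: coxeter_system_def parabolic_def)

lemma countable_carrier: "countable (carrier G)"
proof -
  have "carrier G = word_prod G ` lists S" using carrier_eq_words by (auto simp: lists_eq_set)
  then show ?thesis using finite_gens by (simp add: countable_finite)
qed

lemma subgroup_parabolic: "J \<subseteq> S \<Longrightarrow> subgroup (parabolic G J) G"
  unfolding parabolic_def using generate_is_subgroup gens_subset_carrier by blast

lemma parabolic_closed: "J \<subseteq> S \<Longrightarrow> g \<in> parabolic G J \<Longrightarrow> g \<in> carrier G"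
  using subgroup.mem_carrier[OF subgroup_parabolic] by blast

lemma gen_in_parabolic: "s \<in> J \<Longrightarrow> s \<in> parabolic G J"
  unfolding parabolic_def by (rule generate.incl)

lemma word_in_parabolic: "J \<subseteq> S \<Longrightarrow> set ws \<subseteq> J \<Longrightarrow> word_prod G ws \<in> parabolic G J"
  using parabolic_eq_words by blast

lemma parabolic_mono: "J \<subseteq> K \<Longrightarrow> parabolic G J \<subseteq> parabolic G K"
  unfolding parabolic_def by (rule mono_generate)

lemma hom_to_countable_group:
  assumes H: "group H" "countable (carrier H)" and f: "f \<in> S \<rightarrow> carrier H"
    and sq: "\<And>s. s \<in> S \<Longrightarrow> f s \<otimes>\<^bsub>H\<^esub> f s = \<one>\<^bsub>H\<^esub>"
    and braid: "\<And>s t. s \<in> S \<Longrightarrow> t \<in> S \<Longrightarrow> coxeter_m G s t \<noteq> 0 \<Longrightarrow>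
       (f s \<otimes>\<^bsub>H\<^esub> f t) [^]\<^bsub>H\<^esub> coxeter_m G s t = \<one>\<^bsub>H\<^esub>"
  obtains h where "h \<in> hom G H" "\<And>s. s \<in> S \<Longrightarrow> h s = f s"
proof -
  interpret H: group H by (rule H(1))
  let ?N = "nat_copy H" and ?e = "to_nat_on (carrier H)" and ?d = "from_nat_into (carrier H)"
  have N: "group ?N" using group_nat_copy[OF H] .
  have e: "?e \<in> hom H ?N" using to_nat_on_hom_nat_copy[OF H] .
  have d: "?d \<in> hom ?N H" using from_nat_into_hom_nat_copy[OF H] .
  have fs: "\<And>s. s \<in> S \<Longrightarrow> f s \<in> carrier H" using f by blast
  have "(\<lambda>s. ?e (f s)) \<in> S \<rightarrow> carrier ?N" using e fs by (auto simp: hom_def)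
  moreover have "\<forall>s\<in>S. ?e (f s) \<otimes>\<^bsub>?N\<^esub> ?e (f s) = \<one>\<^bsub>?N\<^esub>"
    using e fs sq hom_one[OF e H(1) N] by (simp flip: hom_mult[OF e])
  moreover have "\<forall>s\<in>S. \<forall>t\<in>S. coxeter_m G s t \<noteq> 0 \<longrightarrow>
      (?e (f s) \<otimes>\<^bsub>?N\<^esub> ?e (f t)) [^]\<^bsub>?N\<^esub> coxeter_m G s t = \<one>\<^bsub>?N\<^esub>"
    using e fs braid hom_one[OF e H(1) N]
    by (simp flip: hom_mult[OF e] hom_nat_pow[OF e _ H(1) N])
  ultimately have "\<exists>h' \<in> hom G ?N. \<forall>s\<in>S. h' s = ?e (f s)"
    using coxeter_system N unfolding coxeter_system_def by blast
  then obtain h' where h': "h' \<in> hom G ?N" "\<And>s. s \<in> S \<Longrightarrow> h' s = ?e (f s)" by blast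
  show thesis
  proof
    show "compose (carrier G) ?d h' \<in> hom G H" using h'(1) d by (rule hom_compose)
    show "compose (carrier G) ?d h' s = f s" if "s \<in> S" for s
      using h'(2) fs H(2) that by (simp add: compose_def)
  qed
qed

section \<open>The reflection cocycle\<close>

lemma reflection_seq_closed: "set xs \<subseteq> carrier G \<Longrightarrow> set (reflection_seq G xs) \<subseteq> carrier G"
  by (induction xs) auto

lemma mem_reflection_seq:
  "set xs \<subseteq> carrier G \<Longrightarrow> r \<in> set (reflection_seq G xs) \<longleftrightarrow>
     (\<exists>b y c. xs = b @ y # c \<and> r = inv (word_prod G c) \<otimes> y \<otimes> word_prod G c)"
  by (induction xs) (auto simp: Cons_eq_append_conv)

lemma reflection_seq_snoc:
  "set xs \<subseteq> S \<Longrightarrow> s \<in> S \<Longrightarrow>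
     reflection_seq G (xs @ [s]) = map (\<lambda>q. s \<otimes> q \<otimes> s) (reflection_seq G xs) @ [s]"
proof (induction xs)
  case (Cons x xs)
  have "inv (word_prod G (xs @ [s])) \<otimes> x \<otimes> word_prod G (xs @ [s]) =
      s \<otimes> (inv (word_prod G xs) \<otimes> x \<otimes> word_prod G xs) \<otimes> s"
    using Cons by (simp add: word_prod_snoc inv_mult_group inv_gen m_assoc)
  then show ?case using Cons by simp
qed simp

lemma odd_reflections_distinct:
  "distinct (reflection_seq G u) \<Longrightarrow> odd_reflections G u = set (reflection_seq G u)"
  by (auto simp: odd_reflections_def count_list_distinct split: if_splits)

lemma cocycle_word_prod:
  assumes "set ws \<subseteq> S"
  shows "word_prod (cocycle_group G) (map (\<lambda>s. (s, {s})) ws) = (word_prod G ws, odd_reflections G ws)"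
  using assms
proof (induction ws)
  case Nil
  then show ?case by (simp add: word_prod_def cocycle_group_one odd_reflections_def)
next
  case (Cons x xs)
  let ?W = "word_prod G xs"
  have x: "x \<in> carrier G" and W: "?W \<in> carrier G" using Cons by auto
  have IH: "word_prod (cocycle_group G) (map (\<lambda>s. (s, {s})) xs) = (?W, odd_reflections G xs)"
    using Cons by auto
  have rc: "set (reflection_seq G xs) \<subseteq> carrier G"
    using Cons gens_subset_carrier by (intro reflection_seq_closed) auto
  have conj: "(inv ?W \<otimes> x \<otimes> ?W = r) = (?W \<otimes> r \<otimes> inv ?W = x)" if r: "r \<in> carrier G" for r
    using conj_eq_iff[of ?W x r] inv_solve_right'[of x "?W \<otimes> r" ?W] x W r by (metis m_closed)
  have "odd_reflections G (x # xs) =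
      {r \<in> carrier G. (r \<in> odd_reflections G xs) \<noteq> (?W \<otimes> r \<otimes> inv ?W \<in> {x})}"
  proof (rule Set.set_eqI)
    fix r
    show "r \<in> odd_reflections G (x # xs) \<longleftrightarrow>
        r \<in> {r \<in> carrier G. (r \<in> odd_reflections G xs) \<noteq> (?W \<otimes> r \<otimes> inv ?W \<in> {x})}"
    proof (cases "r \<in> carrier G")
      case True
      then show ?thesis using conj[OF True] by (auto simp: odd_reflections_def)
    next
      case False
      then have "r \<notin> set (reflection_seq G (x # xs))" using rc x W by auto
      then show ?thesis using False by (auto simp: odd_reflections_def count_list_0_iff)
    qed
  qed
  then show ?case
    using IH by (simp add: word_prod_def cocycle_group_mult)
qed

lemma gen_mult_pow_commute:
  assumes "s \<in> S" "t \<in> S"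
  shows "t \<otimes> (s \<otimes> t) [^] (k::nat) = (t \<otimes> s) [^] k \<otimes> t"
proof (induction k)
  case (Suc k)
  have "t \<otimes> (s \<otimes> t) [^] Suc k = t \<otimes> (s \<otimes> t) [^] k \<otimes> (s \<otimes> t)" using assms by (simp add: m_assoc)
  also have "\<dots> = (t \<otimes> s) [^] k \<otimes> (t \<otimes> s) \<otimes> t" using Suc assms by (simp add: m_assoc)
  finally show ?case by simp
qed (use assms in simp)

lemma reflection_seq_replicate_pair:
  assumes s: "s \<in> S" and t: "t \<in> S"
  shows "reflection_seq G (concat (replicate k [s, t])) = map (\<lambda>e. (t \<otimes> s) [^] e \<otimes> t) (rev [0..<2*k])"
proof (induction k)
  case (Suc k)
  let ?P = "s \<otimes> t" and ?Q = "t \<otimes> s"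
  have Pc: "?P \<in> carrier G" "?Q \<in> carrier G" using assms by auto
  have wk: "word_prod G (concat (replicate k [s, t])) = ?P [^] k"
    using word_prod_replicate_pair assms by simp
  have iP: "inv (?P [^] k) = ?Q [^] k"
    using assms by (simp add: inv_gen nat_pow_inv[symmetric] inv_mult_group)
  have e1: "inv (?P [^] k) \<otimes> t \<otimes> ?P [^] k = ?Q [^] (2*k) \<otimes> t"
  proof -
    have "inv (?P [^] k) \<otimes> t \<otimes> ?P [^] k = ?Q [^] k \<otimes> (t \<otimes> ?P [^] k)"
      using iP assms by (simp add: m_assoc)
    also have "\<dots> = ?Q [^] k \<otimes> ?Q [^] k \<otimes> t"
      using gen_mult_pow_commute[OF s t] assms by (simp add: m_assoc)
    also have "\<dots> = ?Q [^] (2*k) \<otimes> t" using Pc by (simp add: nat_pow_mult mult_2)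
    finally show ?thesis .
  qed
  have e2: "inv (t \<otimes> ?P [^] k) \<otimes> s \<otimes> (t \<otimes> ?P [^] k) = ?Q [^] (Suc (2*k)) \<otimes> t"
  proof -
    have "?Q [^] (Suc (2*k)) = ?Q [^] (Suc k) \<otimes> ?Q [^] k"
      by (subst nat_pow_mult) (use Pc in \<open>simp_all add: mult_2\<close>)
    then have Q: "?Q [^] k \<otimes> ?Q \<otimes> ?Q [^] k = ?Q [^] (Suc (2*k))" by simp
    have "inv (t \<otimes> ?P [^] k) \<otimes> s \<otimes> (t \<otimes> ?P [^] k) = ?Q [^] k \<otimes> ?Q \<otimes> (t \<otimes> ?P [^] k)"
      using iP assms by (simp add: inv_gen inv_mult_group m_assoc)
    also have "\<dots> = ?Q [^] k \<otimes> ?Q \<otimes> ?Q [^] k \<otimes> t"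
      using gen_mult_pow_commute[OF s t] assms by (simp add: m_assoc)
    finally show ?thesis using Q by simp
  qed
  show ?case using Suc e1 e2 wk by simp
qed simp

text \<open>The reflection sequence of \<open>(st)\<^sup>m\<close> is periodic with period \<open>m\<close> when \<open>(st)\<^sup>m = 1\<close>,
  so every reflection occurs in it an even number of times.\<close>

lemma odd_reflections_replicate_pair:
  assumes s: "s \<in> S" and t: "t \<in> S" and m: "(s \<otimes> t) [^] (m::nat) = \<one>"
  shows "odd_reflections G (concat (replicate m [s, t])) = {}"
proof -
  let ?Q = "t \<otimes> s"
  have "?Q [^] m = inv ((s \<otimes> t) [^] m)"
    using s t by (simp add: inv_gen inv_mult_group flip: nat_pow_inv)
  then have Qm: "?Q [^] m = \<one>" using m by simp
  define f where "f = (\<lambda>e::nat. ?Q [^] e \<otimes> t)"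
  have "f (e + m) = f e" for e
    using Qm assms by (simp add: f_def flip: nat_pow_mult)
  then have mm: "map f [m..<m+m] = map f [0..<m]"
    by (simp add: map_add_upt[symmetric])
  have "count_list (reflection_seq G (concat (replicate m [s, t]))) r = 2 * count_list (map f [0..<m]) r"
    for r
  proof -
    have "count_list (reflection_seq G (concat (replicate m [s, t]))) r = count_list (map f [0..<m+m]) r"
      using reflection_seq_replicate_pair[OF s t, of m]
      by (simp only: f_def rev_map[symmetric] count_list_rev mult_2)
    also have "\<dots> = count_list (map f [0..<m]) r + count_list (map f [m..<m+m]) r"
      using upt_add_eq_append[of 0 m m] by simp
    finally show ?thesis unfolding mm by simp
  qed
  then show ?thesis by (simp add: odd_reflections_def)
qed

lemma cocycle_gen_square:
  assumes s: "s \<in> S"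
  shows "(s, {s}) \<otimes>\<^bsub>cocycle_group G\<^esub> (s, {s}) = \<one>\<^bsub>cocycle_group G\<^esub>"
proof -
  have "s \<otimes> r \<otimes> inv s = s \<longleftrightarrow> r = s" if r: "r \<in> carrier G" for r
  proof -
    have "s \<otimes> r \<otimes> inv s = s \<longleftrightarrow> s \<otimes> r = s \<otimes> s"
      using s r by (metis gen_closed inv_closed m_closed inv_solve_right)
    also have "\<dots> \<longleftrightarrow> r = s" using s r by (metis gen_closed l_cancel)
    finally show ?thesis .
  qed
  then show ?thesis using gen_square[OF s] by (auto simp: cocycle_group_mult cocycle_group_one)
qed

lemma cocycle_gen_braid:
  assumes st: "s \<in> S" "t \<in> S"
  shows "((s, {s}) \<otimes>\<^bsub>cocycle_group G\<^esub> (t, {t})) [^]\<^bsub>cocycle_group G\<^esub> coxeter_m G s t =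
    \<one>\<^bsub>cocycle_group G\<^esub>"
proof -
  let ?C = "cocycle_group G" and ?m = "coxeter_m G s t"
  interpret C: group ?C by (rule group_cocycle_group)
  have pm: "(s \<otimes> t) [^] ?m = \<one>" using st by (simp add: coxeter_m_def)
  have "((s, {s}) \<otimes>\<^bsub>?C\<^esub> (t, {t})) [^]\<^bsub>?C\<^esub> ?m =
      word_prod ?C (map (\<lambda>s. (s, {s})) (concat (replicate ?m [s, t])))"
    using C.word_prod_replicate_pair st by (simp add: map_concat cocycle_group_carrier)
  also have "\<dots> = \<one>\<^bsub>?C\<^esub>"
    using cocycle_word_prod st word_prod_replicate_pair odd_reflections_replicate_pair[OF st pm] pm
    by (simp add: cocycle_group_one)
  finally show ?thesis .
qed

theorem odd_reflections_eq:
  assumes "set ws \<subseteq> S" "set ws' \<subseteq> S" "word_prod G ws = word_prod G ws'"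
  shows "odd_reflections G ws = odd_reflections G ws'"
proof -
  let ?C = "cocycle_group G"
  obtain h where h: "h \<in> hom G ?C" "\<And>s. s \<in> S \<Longrightarrow> h s = (s, {s})"
    by (rule hom_to_countable_group[where f = "\<lambda>s. (s, {s})", OF group_cocycle_group
          countable_cocycle_group_carrier[OF countable_carrier]])
      (auto simp: cocycle_group_carrier cocycle_gen_square cocycle_gen_braid)
  interpret h: group_hom G ?C h
    by (intro group_hom.intro group_hom_axioms.intro is_group group_cocycle_group h(1))
  have "h (word_prod G xs) = (word_prod G xs, odd_reflections G xs)" if "set xs \<subseteq> S" for xs
  proof -
    have "h (word_prod G xs) = word_prod ?C (map h xs)"
      using that gens_subset_carrier by (intro h.hom_word_prod) auto
    also have "map h xs = map (\<lambda>s. (s, {s})) xs" using that h(2) by auto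
    finally show ?thesis using cocycle_word_prod[OF that] by simp
  qed
  from this[OF assms(1)] this[OF assms(2)] show ?thesis using assms(3) by simp
qed

section \<open>Reduced words\<close>

abbreviation len :: "'a \<Rightarrow> nat" where
  "len w \<equiv> word_length G S w"

abbreviation reduced :: "'a \<Rightarrow> 'a list \<Rightarrow> bool" where
  "reduced w u \<equiv> reduced_decomposition G S w u"

lemma word_length_le: "set u \<subseteq> S \<Longrightarrow> len (word_prod G u) \<le> length u"
  unfolding word_length_def by (rule Least_le) auto

lemma reduced_exists: "w \<in> carrier G \<Longrightarrow> \<exists>u. reduced w u"
proof -
  assume "w \<in> carrier G"
  then obtain v where v: "set v \<subseteq> S" "word_prod G v = w" using carrier_eq_words by auto
  let ?P = "\<lambda>n. \<exists>ws. length ws = n \<and> set ws \<subseteq> S \<and> word_prod G ws = w"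
  have "?P (length v)" using v by auto
  then have "?P (Least ?P)" by (rule LeastI)
  then show ?thesis unfolding reduced_decomposition_def word_length_def by auto
qed

lemma reducedD: "reduced w u \<Longrightarrow> set u \<subseteq> S \<and> word_prod G u = w \<and> length u = len w"
  by (simp add: reduced_decomposition_def)

lemma reducedI: "set u \<subseteq> S \<Longrightarrow> word_prod G u = w \<Longrightarrow> length u = len w \<Longrightarrow> reduced w u"
  by (simp add: reduced_decomposition_def)

lemma reduced_carrier: "reduced w u \<Longrightarrow> w \<in> carrier G"
  using reducedD by (metis word_prod_closed_gens)

lemma reduced_length_le: "reduced w u \<Longrightarrow> set v \<subseteq> S \<Longrightarrow> word_prod G v = w \<Longrightarrow> length u \<le> length v"
  using reducedD word_length_le by metis

text \<open>The hypothesis says that the reflections at the positions of \<open>x\<close> and \<open>y\<close> coincide.\<close>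

lemma delete_letter_pair:
  assumes S: "set (a @ x # b @ y # c) \<subseteq> S"
    and eq: "inv (word_prod G (b @ y # c)) \<otimes> x \<otimes> word_prod G (b @ y # c) =
      inv (word_prod G c) \<otimes> y \<otimes> word_prod G c"
  shows "word_prod G (a @ b @ c) = word_prod G (a @ x # b @ y # c)"
proof -
  let ?B = "word_prod G b" and ?C = "word_prod G c"
  have c: "?B \<in> carrier G" "?C \<in> carrier G" "x \<in> carrier G" "y \<in> S" using S by auto
  have "x \<otimes> (?B \<otimes> (y \<otimes> ?C)) = (?B \<otimes> (y \<otimes> ?C)) \<otimes> (inv ?C \<otimes> y \<otimes> ?C)"
    using eq c S by (subst conj_eq_iff[symmetric]) (auto simp: word_prod_append_gens)
  also have "\<dots> = ?B \<otimes> ?C" using c by (simp add: m_assoc gen_cancel_left r_inv flip: m_assoc[of ?C "inv ?C"])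
  finally have "x \<otimes> (?B \<otimes> (y \<otimes> ?C)) = ?B \<otimes> ?C" .
  then show ?thesis using S c by (simp add: word_prod_append_gens)
qed

lemma exchange_reflection:
  assumes "set u \<subseteq> S" "s \<in> S" "s \<in> set (reflection_seq G u)"
  shows "\<exists>b y c. u = b @ y # c \<and> word_prod G (b @ c) = word_prod G u \<otimes> s"
proof -
  obtain b y c where u: "u = b @ y # c" and s: "s = inv (word_prod G c) \<otimes> y \<otimes> word_prod G c"
    using assms mem_reflection_seq[of u s] gens_subset_carrier by auto
  have S: "set b \<subseteq> S" "set c \<subseteq> S" "y \<in> S" using assms(1) u by auto
  have ys: "y \<otimes> word_prod G c = word_prod G c \<otimes> s"
    using conj_eq_iff[of "word_prod G c" y s] s S assms(2) by auto
  have "word_prod G u = word_prod G b \<otimes> (y \<otimes> word_prod G c)"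
    unfolding u using S by (simp add: word_prod_append_gens)
  then have "word_prod G u \<otimes> s = word_prod G b \<otimes> (y \<otimes> (word_prod G c \<otimes> s))"
    using S assms(2) by (simp add: m_assoc)
  also have "\<dots> = word_prod G b \<otimes> (y \<otimes> (y \<otimes> word_prod G c))" by (simp only: ys)
  also have "\<dots> = word_prod G (b @ c)" using S by (simp add: gen_cancel_left word_prod_append_gens)
  finally show ?thesis using u by (intro exI[of _ b] exI[of _ y] exI[of _ c]) simp
qed

lemma not_distinct_reflection_seq:
  "set xs \<subseteq> S \<Longrightarrow> \<not> distinct (reflection_seq G xs) \<Longrightarrow> \<exists>a x b y c. xs = a @ x # b @ y # c \<and>
     inv (word_prod G (b @ y # c)) \<otimes> x \<otimes> word_prod G (b @ y # c) =
     inv (word_prod G c) \<otimes> y \<otimes> word_prod G c"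
proof (induction xs)
  case (Cons x xs)
  show ?case
  proof (cases "distinct (reflection_seq G xs)")
    case True
    then have "inv (word_prod G xs) \<otimes> x \<otimes> word_prod G xs \<in> set (reflection_seq G xs)"
      using Cons by simp
    then obtain b y c where "xs = b @ y # c"
      "inv (word_prod G xs) \<otimes> x \<otimes> word_prod G xs = inv (word_prod G c) \<otimes> y \<otimes> word_prod G c"
      using mem_reflection_seq[of xs] Cons gens_subset_carrier by auto
    then show ?thesis by (intro exI[of _ "[]"]) auto
  next
    case False
    then obtain a x' b y c where "xs = a @ x' # b @ y # c"
      "inv (word_prod G (b @ y # c)) \<otimes> x' \<otimes> word_prod G (b @ y # c) =
       inv (word_prod G c) \<otimes> y \<otimes> word_prod G c"
      using Cons by auto
    then show ?thesis by (intro exI[of _ "x # a"]) auto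
  qed
qed simp

lemma reduced_distinct_reflection_seq:
  assumes "reduced w u"
  shows "distinct (reflection_seq G u)"
proof (rule ccontr)
  assume "\<not> distinct (reflection_seq G u)"
  then obtain a x b y c where u: "u = a @ x # b @ y # c" and
    eq: "inv (word_prod G (b @ y # c)) \<otimes> x \<otimes> word_prod G (b @ y # c) =
      inv (word_prod G c) \<otimes> y \<otimes> word_prod G c"
    using not_distinct_reflection_seq assms reducedD by blast
  have S: "set (a @ x # b @ y # c) \<subseteq> S" using assms u reducedD by blast
  have "word_prod G (a @ b @ c) = w" using delete_letter_pair[OF S eq] assms u reducedD by simp
  then have "length u \<le> length (a @ b @ c)" by (intro reduced_length_le[OF assms]) (use S in auto)
  then show False using u by simp
qed

text \<open>The converse rests on the reflection cocycle: a reduced word for the same element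
  has the same set of odd reflections, hence (being distinct) the same length.\<close>

lemma distinct_reflection_seq_reduced:
  assumes S: "set u \<subseteq> S" and d: "distinct (reflection_seq G u)"
  shows "reduced (word_prod G u) u"
proof -
  obtain v where v: "reduced (word_prod G u) v" using reduced_exists[of "word_prod G u"] S by auto
  have "odd_reflections G u = odd_reflections G v" using odd_reflections_eq S v reducedD by metis
  then have "set (reflection_seq G u) = set (reflection_seq G v)"
    using odd_reflections_distinct d reduced_distinct_reflection_seq[OF v] by simp
  then have "length u = length v"
    using distinct_card[OF d] distinct_card[OF reduced_distinct_reflection_seq[OF v]] by simp
  then show ?thesis using v S by (simp add: reduced_decomposition_def)
qed

lemma reduced_word_in_letters: "set u \<subseteq> S \<Longrightarrow> \<exists>v. set v \<subseteq> set u \<and> reduced (word_prod G u) v"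
proof (induction "length u" arbitrary: u rule: less_induct)
  case less
  show ?case
  proof (cases "distinct (reflection_seq G u)")
    case True then show ?thesis using distinct_reflection_seq_reduced less by blast
  next
    case False
    then obtain a x b y c where u: "u = a @ x # b @ y # c" and
      eq: "inv (word_prod G (b @ y # c)) \<otimes> x \<otimes> word_prod G (b @ y # c) =
        inv (word_prod G c) \<otimes> y \<otimes> word_prod G c"
      using not_distinct_reflection_seq less by blast
    have S: "set (a @ x # b @ y # c) \<subseteq> S" using less u by blast
    have "word_prod G (a @ b @ c) = word_prod G u" using delete_letter_pair[OF S eq] u by simp
    moreover obtain v where "set v \<subseteq> set (a @ b @ c)" "reduced (word_prod G (a @ b @ c)) v"
      using less(1)[of "a @ b @ c"] u S by auto
    ultimately show ?thesis using u by auto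
  qed
qed

lemma word_length_le_mult_gen: "w \<in> carrier G \<Longrightarrow> s \<in> S \<Longrightarrow> len w \<le> len (w \<otimes> s) + 1"
proof -
  assume w: "w \<in> carrier G" and s: "s \<in> S"
  obtain r where r: "reduced (w \<otimes> s) r" using reduced_exists[of "w \<otimes> s"] w s by auto
  have "word_prod G (r @ [s]) = w" using reducedD[OF r] w s by (simp add: word_prod_snoc gen_cancel_right)
  then show ?thesis using word_length_le[of "r @ [s]"] reducedD[OF r] s by fastforce
qed

lemma word_length_mult_gen_reflection:
  assumes u: "reduced w u" and s: "s \<in> S" and i: "s \<in> set (reflection_seq G u)"
  shows "len (w \<otimes> s) + 1 = len w"
proof -
  have uS: "set u \<subseteq> S" "length u = len w" "word_prod G u = w" using reducedD[OF u] by auto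
  obtain b y c where bc: "u = b @ y # c" "word_prod G (b @ c) = w \<otimes> s"
    using exchange_reflection[OF uS(1) s i] uS by blast
  have "len (w \<otimes> s) \<le> length (b @ c)" using word_length_le[of "b @ c"] bc uS by auto
  then show ?thesis using bc uS word_length_le_mult_gen[OF reduced_carrier[OF u] s] by simp
qed

lemma reduced_snoc_gen:
  assumes u: "reduced w u" and s: "s \<in> S" and i: "s \<notin> set (reflection_seq G u)"
  shows "reduced (w \<otimes> s) (u @ [s])"
proof -
  have S: "set u \<subseteq> S" using reducedD[OF u] by blast
  have rc: "set (reflection_seq G u) \<subseteq> carrier G"
    using reflection_seq_closed S gens_subset_carrier by blast
  have "inj_on (\<lambda>q. s \<otimes> q \<otimes> s) (set (reflection_seq G u))"
    using rc s by (intro inj_onI) (meson gen_closed l_cancel m_closed r_cancel subsetD)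
  moreover have "s \<notin> (\<lambda>q. s \<otimes> q \<otimes> s) ` set (reflection_seq G u)"
  proof
    assume "s \<in> (\<lambda>q. s \<otimes> q \<otimes> s) ` set (reflection_seq G u)"
    then obtain q where q: "q \<in> set (reflection_seq G u)" "s = s \<otimes> q \<otimes> s" by auto
    then have "s \<otimes> (s \<otimes> (s \<otimes> s)) = s \<otimes> (s \<otimes> (s \<otimes> q \<otimes> s \<otimes> s))" by simp
    then have "q \<otimes> s = \<one>" using q rc s by (simp add: gen_cancel_left m_assoc subsetD)
    then have "q = s" using q rc s by (metis gen_closed inv_equality inv_gen subsetD)
    then show False using q i by simp
  qed
  ultimately have "distinct (reflection_seq G (u @ [s]))"
    using reflection_seq_snoc[OF S s] reduced_distinct_reflection_seq[OF u] by (simp add: distinct_map)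
  then have "reduced (word_prod G (u @ [s])) (u @ [s])" using distinct_reflection_seq_reduced S s by simp
  then show ?thesis using word_prod_snoc S s reducedD[OF u] by metis
qed

lemma descent_in_reflection_seq:
  assumes "reduced w u" "s \<in> S" "len (w \<otimes> s) < len w"
  shows "s \<in> set (reflection_seq G u)"
proof (rule ccontr)
  assume "s \<notin> set (reflection_seq G u)"
  then have "reduced (w \<otimes> s) (u @ [s])" using reduced_snoc_gen assms by blast
  then show False using reducedD[OF assms(1)] assms(3) by (simp add: reduced_decomposition_def)
qed

lemma word_length_mult_gen:
  assumes "w \<in> carrier G" "s \<in> S"
  shows "len (w \<otimes> s) + 1 = len w \<or> len (w \<otimes> s) = len w + 1"
proof -
  obtain u where u: "reduced w u" using reduced_exists assms by auto
  show ?thesis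
  proof (cases "s \<in> set (reflection_seq G u)")
    case True then show ?thesis using word_length_mult_gen_reflection u assms by auto
  next
    case False
    then have "reduced (w \<otimes> s) (u @ [s])" using reduced_snoc_gen u assms by blast
    then show ?thesis using reducedD[OF u] by (simp add: reduced_decomposition_def)
  qed
qed

lemma reduced_butlast:
  assumes "reduced w (u @ [s])"
  shows "reduced (w \<otimes> s) u" and "len (w \<otimes> s) < len w"
proof -
  have S: "set u \<subseteq> S" "s \<in> S" using reducedD[OF assms] by auto
  have "w = word_prod G u \<otimes> s" using reducedD[OF assms] word_prod_snoc[OF S] by metis
  then have e: "word_prod G u = w \<otimes> s" using S by (simp add: gen_cancel_right)
  have "len (w \<otimes> s) \<le> length u" using word_length_le[OF S(1)] e by simp
  moreover have "len w \<le> len (w \<otimes> s) + 1"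
    using word_length_le_mult_gen reduced_carrier[OF assms] S by auto
  ultimately have "length u = len (w \<otimes> s)" using reducedD[OF assms] by fastforce
  then show "reduced (w \<otimes> s) u" using e S by (simp add: reducedI)
  show "len (w \<otimes> s) < len w" using \<open>len (w \<otimes> s) \<le> length u\<close> reducedD[OF assms] by fastforce
qed

lemma reduced_infix:
  assumes "reduced w (a @ b @ c)"
  shows "reduced (word_prod G b) b"
proof -
  have S: "set a \<subseteq> S" "set b \<subseteq> S" "set c \<subseteq> S" using reducedD[OF assms] by auto
  obtain b' where b': "reduced (word_prod G b) b'" using reduced_exists[of "word_prod G b"] S by auto
  have b'S: "set b' \<subseteq> S" "word_prod G b' = word_prod G b" using reducedD[OF b'] by auto
  have "word_prod G (a @ b' @ c) = w" using reducedD[OF assms] b'S S by (simp add: word_prod_append_gens)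
  then have "length (a @ b @ c) \<le> length (a @ b' @ c)"
    by (intro reduced_length_le[OF assms]) (use S b'S in auto)
  then show ?thesis using reduced_length_le[OF b' S(2)] reducedD[OF b'] S by (auto intro: reducedI)
qed

lemma reduced_prefix: "reduced w (a @ b) \<Longrightarrow> reduced (word_prod G a) a"
  using reduced_infix[of w "[]" a b] by simp

section \<open>Parabolic subgroups and minimal coset representatives\<close>

lemma reflection_seq_in_parabolic:
  assumes J: "J \<subseteq> S" and v: "set v \<subseteq> J"
  shows "set (reflection_seq G v) \<subseteq> parabolic G J"
proof
  fix r assume "r \<in> set (reflection_seq G v)"
  then obtain b y c where bc: "v = b @ y # c" "r = inv (word_prod G c) \<otimes> y \<otimes> word_prod G c"
    using mem_reflection_seq[of v r] v J gens_subset_carrier by blast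
  have "word_prod G c \<in> parabolic G J" "y \<in> parabolic G J"
    using bc v J by (auto intro: word_in_parabolic gen_in_parabolic)
  then show "r \<in> parabolic G J"
    using bc subgroup_parabolic[OF J] by (simp add: subgroup.m_closed subgroup.m_inv_closed)
qed

lemma gen_in_parabolic_iff:
  assumes J: "J \<subseteq> S" and s: "s \<in> S"
  shows "s \<in> parabolic G J \<longleftrightarrow> s \<in> J"
proof
  assume "s \<in> parabolic G J"
  then obtain v where v: "set v \<subseteq> J" "word_prod G v = s" using parabolic_eq_words[OF J] by auto
  obtain v' where v': "set v' \<subseteq> set v" "reduced s v'" using reduced_word_in_letters[of v] v J by auto
  have "length v' \<le> 1" using reduced_length_le[OF v'(2), of "[s]"] s by simp
  moreover have "v' \<noteq> []" using reducedD[OF v'(2)] gen_neq_one[OF s] by auto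
  ultimately obtain j where "v' = [j]" by (cases v') auto
  then show "s \<in> J" using v' v reducedD[OF v'(2)] by auto
qed (rule gen_in_parabolic)

text \<open>The last letter of \<open>u\<close> is the last entry of its reflection sequence. This sequence has
  the same entries as that of a reduced word for \<open>w\<close> in the letters \<open>J\<close> (both are the odd
  reflections of \<open>w\<close>), so the letter lies in \<open>W\<^sub>J\<close>, hence in \<open>J\<close>.\<close>

lemma reduced_parabolic_letters:
  assumes J: "J \<subseteq> S"
  shows "reduced w u \<Longrightarrow> w \<in> parabolic G J \<Longrightarrow> set u \<subseteq> J"
proof (induction u arbitrary: w rule: rev_induct)
  case (snoc x u)
  have S: "set u \<subseteq> S" "x \<in> S" using reducedD[OF snoc(2)] by auto
  obtain v where v: "set v \<subseteq> J" "word_prod G v = w" using snoc parabolic_eq_words[OF J] by auto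
  obtain v' where v': "set v' \<subseteq> set v" "reduced w v'" using reduced_word_in_letters[of v] v J by auto
  have "odd_reflections G (u @ [x]) = odd_reflections G v'"
    using odd_reflections_eq snoc v' reducedD by metis
  then have "set (reflection_seq G (u @ [x])) = set (reflection_seq G v')"
    using reduced_distinct_reflection_seq snoc v' odd_reflections_distinct by metis
  also have "\<dots> \<subseteq> parabolic G J" using reflection_seq_in_parabolic[OF J] v' v by blast
  finally have xJ: "x \<in> J" using reflection_seq_snoc[OF S] gen_in_parabolic_iff[OF J S(2)] by simp
  have "w \<otimes> x \<in> parabolic G J"
    using snoc(3) xJ subgroup_parabolic[OF J] by (simp add: subgroup.m_closed gen_in_parabolic)
  then have "set u \<subseteq> J" using snoc.IH reduced_butlast(1)[OF snoc(2)] by blast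
  then show ?case using xJ by simp
qed simp

definition coset_minimal :: "'a set \<Rightarrow> 'a \<Rightarrow> bool" where
  "coset_minimal K a \<longleftrightarrow> a \<in> carrier G \<and> (\<forall>g\<in>parabolic G K. len a \<le> len (a \<otimes> g))"

lemma coset_minimal_exists:
  assumes K: "K \<subseteq> S" and w: "w \<in> carrier G"
  obtains a b where "coset_minimal K a" "b \<in> parabolic G K" "w = a \<otimes> b"
proof -
  have sub: "subgroup (parabolic G K) G" using subgroup_parabolic[OF K] .
  obtain g0 where g0: "g0 \<in> parabolic G K"
    and min: "\<And>g. g \<in> parabolic G K \<Longrightarrow> len (w \<otimes> g0) \<le> len (w \<otimes> g)"
    using ex_has_least_nat[of "\<lambda>g. g \<in> parabolic G K" \<one> "\<lambda>g. len (w \<otimes> g)"]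
      subgroup.one_closed[OF sub] by auto
  have g0c: "g0 \<in> carrier G" using subgroup.mem_carrier[OF sub g0] .
  show thesis
  proof
    show "coset_minimal K (w \<otimes> g0)"
      unfolding coset_minimal_def
    proof (intro conjI ballI)
      fix g assume g: "g \<in> parabolic G K"
      have "len (w \<otimes> g0) \<le> len (w \<otimes> (g0 \<otimes> g))"
        using min g g0 sub by (simp add: subgroup.m_closed)
      then show "len (w \<otimes> g0) \<le> len (w \<otimes> g0 \<otimes> g)"
        using w g0c subgroup.mem_carrier[OF sub g] by (simp add: m_assoc)
    qed (use w g0c in simp)
    show "inv g0 \<in> parabolic G K" using g0 sub by (simp add: subgroup.m_inv_closed)
    show "w = w \<otimes> g0 \<otimes> inv g0" using w g0c by (simp add: m_assoc)
  qed
qed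

text \<open>If \<open>a\<close> is minimal in \<open>aW\<^sub>K\<close> and \<open>s \<in> K\<close> were a descent of \<open>a v\<close> (\<open>v\<close> reduced in \<open>K\<close>), the
  exchange condition would delete a letter either from a reduced word of \<open>a\<close>, making the
  element \<open>a (v s v\<inverse>)\<close> of \<open>aW\<^sub>K\<close> shorter than \<open>a\<close>, or from \<open>v\<close>, making \<open>v s\<close> non-reduced.\<close>

lemma coset_minimal_mult_gen:
  assumes K: "K \<subseteq> S" and a: "coset_minimal K a" and ra: "reduced a ra"
    and v: "set v \<subseteq> K" and s: "s \<in> K" and rvs: "reduced (word_prod G (v @ [s])) (v @ [s])"
    and rX: "reduced (a \<otimes> word_prod G v) (ra @ v)"
  shows "len (a \<otimes> word_prod G v \<otimes> s) = len (a \<otimes> word_prod G v) + 1"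
proof (rule ccontr)
  let ?V = "word_prod G v" and ?X = "a \<otimes> word_prod G v"
  have raS: "set ra \<subseteq> S" "word_prod G ra = a" "length ra = len a" using reducedD[OF ra] by auto
  have vS: "set v \<subseteq> S" "s \<in> S" using v s K by auto
  have ac: "a \<in> carrier G" using a by (simp add: coset_minimal_def)
  assume "len (?X \<otimes> s) \<noteq> len ?X + 1"
  then have "len (?X \<otimes> s) < len ?X" using word_length_mult_gen[of ?X s] ac vS by auto
  then have "s \<in> set (reflection_seq G (ra @ v))" using descent_in_reflection_seq[OF rX vS(2)] by simp
  then obtain b y c where bc: "ra @ v = b @ y # c" "word_prod G (b @ c) = ?X \<otimes> s"
    using exchange_reflection[of "ra @ v" s] raS vS by (auto simp: word_prod_append_gens)
  from append_eq_append_Cons_cases[OF bc(1)[symmetric]] show False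
  proof (elim disjE exE conjE)
    fix d assume d: "ra = b @ y # d" "c = d @ v"
    let ?g = "?V \<otimes> s \<otimes> inv ?V"
    have dS: "set b \<subseteq> S" "set d \<subseteq> S" using d raS by auto
    have g: "?g \<in> parabolic G K"
      using v s subgroup_parabolic[OF K] word_in_parabolic[OF K v] gen_in_parabolic[OF s]
      by (simp add: subgroup.m_closed subgroup.m_inv_closed)
    have "word_prod G (b @ d) \<otimes> ?V = ?X \<otimes> s"
      using bc(2) d dS vS by (simp add: word_prod_append_gens m_assoc)
    then have "word_prod G (b @ d) = ?X \<otimes> s \<otimes> inv ?V"
      using dS vS ac by (subst inv_solve_right) auto
    also have "\<dots> = a \<otimes> ?g" using ac vS by (simp add: m_assoc)
    finally have "word_prod G (b @ d) = a \<otimes> ?g" .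
    then have "len (a \<otimes> ?g) < len a"
      using word_length_le[of "b @ d"] dS d raS by simp
    then show False using a g by (auto simp: coset_minimal_def)
  next
    fix e assume e: "b = ra @ e" "v = e @ y # c"
    have eS: "set e \<subseteq> S" "set c \<subseteq> S" using e vS by auto
    have "a \<otimes> word_prod G (e @ c) = a \<otimes> word_prod G (v @ [s])"
      using bc(2) e eS raS vS ac by (simp add: word_prod_append_gens word_prod_snoc m_assoc)
    then have "word_prod G (e @ c) = word_prod G (v @ [s])" using ac eS vS by simp
    then have "length (v @ [s]) \<le> length (e @ c)" by (intro reduced_length_le[OF rvs]) (use eS in auto)
    then show False using e by simp
  qed
qed

lemma word_length_coset_minimal_mult_word:
  assumes K: "K \<subseteq> S" and a: "coset_minimal K a"
  shows "set v \<subseteq> K \<Longrightarrow> reduced (word_prod G v) v \<Longrightarrow> len (a \<otimes> word_prod G v) = len a + length v"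
proof (induction v rule: rev_induct)
  case Nil then show ?case using a by (simp add: coset_minimal_def)
next
  case (snoc s v)
  have vK: "set v \<subseteq> K" "s \<in> K" and vS: "set v \<subseteq> S" "s \<in> S" using snoc K by auto
  have ac: "a \<in> carrier G" using a by (simp add: coset_minimal_def)
  have IH: "len (a \<otimes> word_prod G v) = len a + length v"
    using snoc.IH vK reduced_prefix snoc(3) by blast
  obtain ra where ra: "reduced a ra" using reduced_exists ac by auto
  have "reduced (a \<otimes> word_prod G v) (ra @ v)"
    using reducedD[OF ra] vS IH by (intro reducedI) (auto simp: word_prod_append_gens)
  then have "len (a \<otimes> word_prod G v \<otimes> s) = len (a \<otimes> word_prod G v) + 1"
    using coset_minimal_mult_gen[OF K a ra vK snoc(3)] by blast
  then show ?case using IH ac vS by (simp add: word_prod_snoc m_assoc)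
qed

lemma word_length_coset_minimal_mult:
  assumes K: "K \<subseteq> S" and a: "coset_minimal K a" and b: "b \<in> parabolic G K"
  shows "len (a \<otimes> b) = len a + len b"
proof -
  obtain rb where rb: "reduced b rb" using reduced_exists parabolic_closed[OF K b] by auto
  have "set rb \<subseteq> K" using reduced_parabolic_letters[OF K rb b] .
  then show ?thesis using word_length_coset_minimal_mult_word[OF K a, of rb] reducedD[OF rb] rb by simp
qed

lemma coset_minimal_descent:
  assumes K: "K \<subseteq> S" and a: "coset_minimal K a" and b: "b \<in> parabolic G K" and b1: "b \<noteq> \<one>"
  obtains s where "s \<in> K" "len (a \<otimes> b \<otimes> s) < len (a \<otimes> b)"
proof -
  have ac: "a \<in> carrier G" using a by (simp add: coset_minimal_def)
  have bc: "b \<in> carrier G" using parabolic_closed[OF K b] .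
  obtain rb where rb: "reduced b rb" using reduced_exists bc by auto
  have "rb \<noteq> []" using b1 reducedD[OF rb] by auto
  then obtain rb' s where rbs: "rb = rb' @ [s]" by (metis rev_exhaust)
  have s: "s \<in> K" using reduced_parabolic_letters[OF K rb b] rbs by auto
  have "len (b \<otimes> s) < len b" using reduced_butlast(2)[of b rb' s] rb rbs by simp
  moreover have "b \<otimes> s \<in> parabolic G K"
    using b s subgroup_parabolic[OF K] by (simp add: subgroup.m_closed gen_in_parabolic)
  ultimately have "len (a \<otimes> (b \<otimes> s)) < len (a \<otimes> b)"
    using word_length_coset_minimal_mult[OF K a] b by simp
  then show thesis using that s ac bc K by (simp add: m_assoc subsetD)
qed

section \<open>Two right descents\<close>

lemma reduced_two_letters_alternating:
  "y \<in> S \<Longrightarrow> s \<in> S \<Longrightarrow> set v \<subseteq> {y, s} \<Longrightarrow> reduced (word_prod G v) v \<Longrightarrow> v \<noteq> [] \<Longrightarrow>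
     last v = s \<Longrightarrow> v = alternating y s (length v)"
proof (induction v arbitrary: y s rule: rev_induct)
  case (snoc x v)
  show ?case
  proof (cases "v = []")
    case False
    then obtain v' z where vz: "v = v' @ [z]" by (metis rev_exhaust)
    have "z \<noteq> s"
    proof
      assume "z = s"
      then have "reduced (word_prod G [s, s]) [s, s]"
        using reduced_infix[of _ v' "[s, s]" "[]"] snoc(5,7) vz by simp
      then have "reduced \<one> [s, s]" using gen_square[OF snoc(3)] snoc(3) by simp
      then show False using reduced_length_le[of \<one> "[s, s]" "[]"] by simp
    qed
    then have "z = y" using snoc vz by auto
    then have "v = alternating s y (length v)"
      using snoc.IH[of s y] snoc(2,3,4) reduced_prefix[OF snoc(5)] False vz by auto
    then show ?thesis using snoc(7) by simp
  qed (use snoc in simp)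
qed simp

lemma alternating_eq_finite_order:
  assumes y: "y \<in> S" and s: "s \<in> S" and k: "0 < k"
    and eq: "word_prod G (alternating y s k) = word_prod G (alternating s y k)"
  shows "ord (y \<otimes> s) \<noteq> 0"
proof -
  let ?P = "y \<otimes> s"
  have Pc: "?P \<in> carrier G" using y s by simp
  have ipow: "(s \<otimes> y) [^] n = inv (?P [^] n)" for n :: nat
    using y s by (simp add: inv_gen inv_mult_group flip: nat_pow_inv)
  define n where "n = k div 2"
  have "\<exists>j::nat. j \<noteq> 0 \<and> ?P [^] j = \<one>"
  proof (cases "k = 2 * n")
    case True
    have "?P [^] n = (s \<otimes> y) [^] n"
      using eq True alternating_even_odd[of y s n] alternating_even_odd[of s y n]
        word_prod_replicate_pair y s by simp
    then have "?P [^] n \<otimes> ?P [^] n = \<one>" using ipow Pc by (metis nat_pow_closed r_inv)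
    then have "?P [^] (n + n) = \<one>" using Pc by (simp add: nat_pow_mult)
    then show ?thesis using True k by (intro exI[of _ "n + n"]) simp
  next
    case False
    then have odd: "k = Suc (2 * n)" unfolding n_def by presburger
    have "s \<otimes> ?P [^] n = y \<otimes> (s \<otimes> y) [^] n"
      using eq odd alternating_even_odd[of y s n] alternating_even_odd[of s y n]
        word_prod_replicate_pair y s by simp
    then have "?P \<otimes> ?P [^] n = (s \<otimes> y) [^] n"
      using y s by (simp add: m_assoc gen_cancel_left)
    then have "?P \<otimes> ?P [^] n \<otimes> ?P [^] n = \<one>" using ipow Pc by (metis nat_pow_closed l_inv)
    moreover have "?P [^] (Suc n + n) = ?P \<otimes> ?P [^] n \<otimes> ?P [^] n"
      using Pc by (simp only: nat_pow_Suc2 flip: nat_pow_mult)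
    ultimately have "?P [^] (Suc n + n) = \<one>" by simp
    then show ?thesis by (intro exI[of _ "Suc n + n"]) simp
  qed
  then show ?thesis using ord_eq_0[OF Pc] by auto
qed

lemma parabolic_pair_two_descents:
  assumes y: "y \<in> S" and s: "s \<in> S" and ys: "y \<noteq> s" and b: "b \<in> parabolic G {y, s}"
    and dy: "len (b \<otimes> y) < len b" and ds: "len (b \<otimes> s) < len b"
  shows "ord (y \<otimes> s) \<noteq> 0" and "\<exists>r. reduced (b \<otimes> s) (r @ [y])"
proof -
  let ?K = "{y, s}" and ?k = "len b"
  have K: "?K \<subseteq> S" using y s by auto
  have bc: "b \<in> carrier G" using parabolic_closed[OF K b] .
  have alt: "\<exists>r. r @ [x] = alternating x' x ?k \<and> reduced (b \<otimes> x) r"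
    if x: "x \<in> ?K" "x' \<in> ?K" "x' \<noteq> x" and dx: "len (b \<otimes> x) < len b" for x x'
  proof -
    have xS: "x \<in> S" using x K by auto
    obtain r where r: "reduced (b \<otimes> x) r" using reduced_exists[of "b \<otimes> x"] bc xS by auto
    have "b \<otimes> x \<in> parabolic G ?K"
      using b x subgroup_parabolic[OF K] by (simp add: subgroup.m_closed gen_in_parabolic)
    then have rK: "set r \<subseteq> ?K" using reduced_parabolic_letters[OF K r] by blast
    have wr: "word_prod G (r @ [x]) = b" using reducedD[OF r] xS bc by (simp add: word_prod_snoc gen_cancel_right)
    have lb: "length (r @ [x]) = ?k"
      using reducedD[OF r] word_length_mult_gen[OF bc xS] dx by auto
    then have "reduced b (r @ [x])" using reducedD[OF r] wr xS by (intro reducedI) auto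
    then have "r @ [x] = alternating x' x (length (r @ [x]))"
      using reduced_two_letters_alternating[of x' x "r @ [x]"] x xS K rK wr by auto
    then have "r @ [x] = alternating x' x ?k" unfolding lb .
    then show ?thesis using r by blast
  qed
  obtain r1 where r1: "r1 @ [s] = alternating y s ?k" "reduced (b \<otimes> s) r1"
    using alt[of s y] ys ds by blast
  obtain r2 where r2: "r2 @ [y] = alternating s y ?k" "reduced (b \<otimes> y) r2"
    using alt[of y s] ys dy by blast
  have "word_prod G (r1 @ [s]) = b" "word_prod G (r2 @ [y]) = b"
    using reducedD[OF r1(2)] reducedD[OF r2(2)] y s bc by (simp_all add: word_prod_snoc gen_cancel_right)
  then have eq: "word_prod G (alternating y s ?k) = word_prod G (alternating s y ?k)"
    using r1(1) r2(1) by simp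
  have "?k \<noteq> 0" using ds by simp
  then show "ord (y \<otimes> s) \<noteq> 0" using alternating_eq_finite_order[OF y s _ eq] by simp
  obtain k' where k': "?k = Suc k'" using \<open>?k \<noteq> 0\<close> not0_implies_Suc by blast
  then have "r1 = alternating s y k'" using r1(1) by simp
  moreover have "k' \<noteq> 0" using eq k' y s ys by (cases k') auto
  ultimately have "r1 = butlast r1 @ [y]" by (cases k') auto
  then show "\<exists>r. reduced (b \<otimes> s) (r @ [y])" using r1(2) by metis
qed

text \<open>Write \<open>w = ab\<close> with \<open>a\<close> minimal in \<open>wW\<^bsub>{y, s}\<^esub>\<close>. Then \<open>y\<close> and \<open>s\<close> are right descents of \<open>b\<close>,
  whose reduced words alternate between \<open>y\<close> and \<open>s\<close>. So both alternating words of length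
  \<open>len b\<close> represent \<open>b\<close>, which forces \<open>m(y, s) < \<infinity>\<close>, and the one ending in \<open>s\<close>, with \<open>s\<close>
  removed, is a reduced word of \<open>bs\<close> ending in \<open>y\<close>.\<close>

lemma two_right_descents:
  assumes w: "w \<in> carrier G" and y: "y \<in> S" and s: "s \<in> S" and ys: "y \<noteq> s"
    and dy: "len (w \<otimes> y) < len w" and ds: "len (w \<otimes> s) < len w"
  shows "ord (y \<otimes> s) \<noteq> 0" and "\<exists>r. reduced (w \<otimes> s) (r @ [y])"
proof -
  let ?K = "{y, s}"
  have K: "?K \<subseteq> S" using y s by auto
  obtain a b where a: "coset_minimal ?K a" and b: "b \<in> parabolic G ?K" and wab: "w = a \<otimes> b"
    using coset_minimal_exists[OF K w] by blast
  have ac: "a \<in> carrier G" using a by (simp add: coset_minimal_def)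
  have bc: "b \<in> carrier G" using parabolic_closed[OF K b] .
  have len_ax: "len (w \<otimes> x) = len a + len (b \<otimes> x)" if "x \<in> ?K" for x
  proof -
    have "b \<otimes> x \<in> parabolic G ?K"
      using b that subgroup_parabolic[OF K] by (simp add: subgroup.m_closed gen_in_parabolic)
    then show ?thesis
      using word_length_coset_minimal_mult[OF K a] wab ac bc that K by (auto simp: m_assoc)
  qed
  have lw: "len w = len a + len b" using word_length_coset_minimal_mult[OF K a b] wab by simp
  have dby: "len (b \<otimes> y) < len b" and dbs: "len (b \<otimes> s) < len b"
    using len_ax[of y] len_ax[of s] lw dy ds by auto
  show "ord (y \<otimes> s) \<noteq> 0" using parabolic_pair_two_descents(1)[OF y s ys b dby dbs] .
  obtain r where r: "reduced (b \<otimes> s) (r @ [y])"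
    using parabolic_pair_two_descents(2)[OF y s ys b dby dbs] by blast
  obtain ra where ra: "reduced a ra" using reduced_exists ac by auto
  have "reduced (w \<otimes> s) (ra @ r @ [y])"
  proof (rule reducedI)
    show "set (ra @ r @ [y]) \<subseteq> S" using reducedD[OF ra] reducedD[OF r] by auto
    show "word_prod G (ra @ r @ [y]) = w \<otimes> s"
      using reducedD[OF ra] reducedD[OF r] wab ac bc s by (simp add: word_prod_append_gens m_assoc)
    show "length (ra @ r @ [y]) = len (w \<otimes> s)" using reducedD[OF ra] reducedD[OF r] len_ax[of s] by simp
  qed
  then show "\<exists>r. reduced (w \<otimes> s) (r @ [y])" by (metis append_assoc)
qed

section \<open>Reduced words of elements of \<open>W\<^sub>1 \<cdots> W\<^sub>m\<close>\<close>

text \<open>\<open>tilde_product J [t\<^sub>1, \<dots>, t\<^sub>m] w\<close> says \<open>w \<in> W\<^sub>1 \<cdots> W\<^sub>m\<close> with \<open>W\<^sub>i = W\<^bsub>J \<union> {t\<^sub>i}\<^esub> - W\<^sub>J\<close>. The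
  empty product is taken to be \<open>W\<^sub>J\<close> rather than \<open>{1}\<close>; for \<open>m > 0\<close> this changes nothing, since
  \<open>W\<^sub>J W\<^sub>1 = W\<^sub>1\<close>, and it makes the predicate stable under right multiplication by \<open>W\<^sub>J\<close>.\<close>

inductive tilde_product :: "'a set \<Rightarrow> 'a list \<Rightarrow> 'a \<Rightarrow> bool" for J where
  tilde_product_Nil: "g \<in> parabolic G J \<Longrightarrow> tilde_product J [] g"
| tilde_product_snoc: "tilde_product J ts w \<Longrightarrow> v \<in> parabolic G (J \<union> {t}) - parabolic G J \<Longrightarrow>
    tilde_product J (ts @ [t]) (w \<otimes> v)"

inductive block_word :: "'a set \<Rightarrow> 'a list \<Rightarrow> 'a list \<Rightarrow> bool" for J where
  block_word_Nil: "set u \<subseteq> J \<Longrightarrow> block_word J [] u"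
| block_word_snoc: "block_word J ts u \<Longrightarrow> set e \<subseteq> J \<union> {t} \<Longrightarrow> t \<in> set e \<Longrightarrow>
    block_word J (ts @ [t]) (u @ e)"

lemma tilde_product_NilD: "tilde_product J [] w \<Longrightarrow> w \<in> parabolic G J"
  by (cases rule: tilde_product.cases) auto

lemma tilde_product_snocD:
  "tilde_product J (ts @ [t]) w \<Longrightarrow>
     \<exists>w' v. tilde_product J ts w' \<and> v \<in> parabolic G (J \<union> {t}) - parabolic G J \<and> w = w' \<otimes> v"
  by (cases rule: tilde_product.cases) auto

lemma tilde_product_closed: "tilde_product J ts w \<Longrightarrow> J \<subseteq> S \<Longrightarrow> set ts \<subseteq> S \<Longrightarrow> w \<in> carrier G"
proof (induction rule: tilde_product.induct)
  case (tilde_product_snoc ts w v t)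
  then have "v \<in> carrier G" using parabolic_closed[of "J \<union> {t}"] by auto
  then show ?case using tilde_product_snoc by auto
qed (use parabolic_closed in blast)

lemma tilde_product_mult_parabolic:
  assumes J: "J \<subseteq> S" and ts: "set ts \<subseteq> S" and P: "tilde_product J ts w" and g: "g \<in> parabolic G J"
  shows "tilde_product J ts (w \<otimes> g)"
  using P
proof (cases rule: tilde_product.cases)
  case tilde_product_Nil
  then show ?thesis using g subgroup_parabolic[OF J] by (simp add: subgroup.m_closed tilde_product.intros)
next
  case (tilde_product_snoc ts' w' v t)
  have K: "J \<union> {t} \<subseteq> S" using J ts tilde_product_snoc by auto
  have gc: "g \<in> carrier G" and vc: "v \<in> carrier G" and w'c: "w' \<in> carrier G"
    using parabolic_closed[OF J g] parabolic_closed[OF K] tilde_product_closed J ts tilde_product_snoc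
    by auto
  have "g \<in> parabolic G (J \<union> {t})" using g parabolic_mono[of J "J \<union> {t}"] by auto
  then have "v \<otimes> g \<in> parabolic G (J \<union> {t})"
    using tilde_product_snoc subgroup_parabolic[OF K] by (auto simp: subgroup.m_closed)
  moreover have "v \<otimes> g \<notin> parabolic G J"
  proof
    assume "v \<otimes> g \<in> parabolic G J"
    then have "v \<otimes> g \<otimes> inv g \<in> parabolic G J"
      using g subgroup_parabolic[OF J] by (simp add: subgroup.m_closed subgroup.m_inv_closed)
    then show False using tilde_product_snoc vc gc by (simp add: m_assoc)
  qed
  ultimately have "tilde_product J (ts' @ [t]) (w' \<otimes> (v \<otimes> g))"
    using tilde_product.tilde_product_snoc tilde_product_snoc by blast
  then show ?thesis using tilde_product_snoc w'c vc gc by (simp add: m_assoc)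
qed

lemma tilde_product_mult_last:
  assumes J: "J \<subseteq> S" and ts: "set (ts @ [t]) \<subseteq> S" and P: "tilde_product J (ts @ [t]) w"
  shows "tilde_product J (ts @ [t]) (w \<otimes> t) \<or> tilde_product J ts (w \<otimes> t)"
proof -
  obtain w' v where 1: "tilde_product J ts w'" "v \<in> parabolic G (J \<union> {t}) - parabolic G J"
    "w = w' \<otimes> v"
    using tilde_product_snocD[OF P] by blast
  have K: "J \<union> {t} \<subseteq> S" using J ts by auto
  have vc: "v \<in> carrier G" and w'c: "w' \<in> carrier G" and tc: "t \<in> carrier G"
    using parabolic_closed[OF K] tilde_product_closed J ts 1 by auto
  have e: "w \<otimes> t = w' \<otimes> (v \<otimes> t)" using 1 w'c vc tc by (simp add: m_assoc)
  show ?thesis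
  proof (cases "v \<otimes> t \<in> parabolic G J")
    case True
    then show ?thesis using tilde_product_mult_parabolic[OF J _ 1(1) True] ts e by auto
  next
    case False
    have "v \<otimes> t \<in> parabolic G (J \<union> {t})"
      using 1 gen_in_parabolic[of t] subgroup_parabolic[OF K] by (simp add: subgroup.m_closed)
    then show ?thesis using tilde_product.tilde_product_snoc[OF 1(1)] False e by auto
  qed
qed

lemma block_word_snoc_letter: "block_word J ts u \<Longrightarrow> y \<in> J \<Longrightarrow> block_word J ts (u @ [y])"
proof (induction rule: block_word.induct)
  case (block_word_snoc ts u e t)
  then have "block_word J (ts @ [t]) (u @ (e @ [y]))" by (intro block_word.block_word_snoc) auto
  then show ?case by simp
qed (simp add: block_word_Nil)

lemma block_word_snoc_last:
  assumes "block_word J (ts @ [t]) u"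
  shows "block_word J (ts @ [t]) (u @ [t])"
  using assms
proof (cases rule: block_word.cases)
  case (block_word_snoc ts' u' e t')
  then have "block_word J (ts' @ [t']) (u' @ (e @ [t']))" by (intro block_word.block_word_snoc) auto
  then show ?thesis using block_word_snoc by simp
qed simp

lemma block_word_new_block: "block_word J ts u \<Longrightarrow> block_word J (ts @ [t]) (u @ [t])"
  by (rule block_word_snoc) auto

lemma block_word_last_outside:
  assumes "block_word J ts (u @ y # q)" and "set ts \<inter> J = {}" and "y \<notin> J" and "set q \<subseteq> J"
  shows "ts \<noteq> [] \<and> last ts = y"
  using assms
proof (cases rule: block_word.cases)
  case (block_word_snoc ts' u' e t)
  have "y \<in> set e \<or> set e \<subseteq> set q"
    using block_word_snoc(2) by (auto simp: append_eq_append_conv2 Cons_eq_append_conv)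
  then show ?thesis using block_word_snoc assms(2-4) by auto
qed auto

text \<open>If \<open>w\<close> were minimal in \<open>wW\<^bsub>J \<union> {t}\<^esub>\<close>, writing \<open>w = w' v\<close> with \<open>v \<in> W\<^bsub>J \<union> {t}\<^esub> - W\<^sub>J\<close>, a reduced
  word of \<open>w'\<close> would end with a block containing \<open>t\<close>; by induction on \<open>m\<close> it ends with
  a block containing \<open>t\<^sub>m\<^sub>-\<^sub>1\<close>, so \<open>t = t\<^sub>m\<^sub>-\<^sub>1\<close>, contradicting \<open>m(t\<^sub>m\<^sub>-\<^sub>1, t) = \<infinity>\<close>.\<close>

lemma tilde_product_not_coset_minimal:
  assumes J: "J \<subseteq> S" and tS: "set (ts @ [t]) \<subseteq> S" and disj: "set (ts @ [t]) \<inter> J = {}"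
    and chain: "ts \<noteq> [] \<Longrightarrow> coxeter_m G (last ts) t = 0"
    and outer: "\<And>w u. tilde_product J ts w \<Longrightarrow> reduced w u \<Longrightarrow> block_word J ts u"
    and P: "tilde_product J (ts @ [t]) w" and min: "coset_minimal (J \<union> {t}) w"
  shows False
proof -
  let ?K = "J \<union> {t}"
  have K: "?K \<subseteq> S" using J tS by auto
  obtain w' v where w': "tilde_product J ts w'" and v: "v \<in> parabolic G ?K" "v \<notin> parabolic G J"
    and wv: "w = w' \<otimes> v"
    using tilde_product_snocD[OF P] by blast
  have vc: "v \<in> carrier G" using parabolic_closed[OF K v(1)] .
  have w'c: "w' \<in> carrier G" using tilde_product_closed[OF w' J] tS by auto
  have iv: "inv v \<in> parabolic G ?K" using v(1) subgroup_parabolic[OF K] by (simp add: subgroup.m_inv_closed)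
  have w'e: "w' = w \<otimes> inv v" using wv w'c vc by (simp add: m_assoc)
  obtain ra where ra: "reduced w ra" using reduced_exists min by (auto simp: coset_minimal_def)
  obtain rv where rv: "reduced (inv v) rv" using reduced_exists[of "inv v"] vc by auto
  have rvK: "set rv \<subseteq> ?K" using reduced_parabolic_letters[OF K rv iv] .
  have "t \<in> set rv"
  proof (rule ccontr)
    assume "t \<notin> set rv"
    then have "set rv \<subseteq> J" using rvK by auto
    then have "inv v \<in> parabolic G J" using word_in_parabolic[OF J] reducedD[OF rv] by metis
    then show False using v(2) vc subgroup_parabolic[OF J] by (metis inv_inv subgroup.m_inv_closed)
  qed
  then obtain p q where pq: "rv = p @ t # q" "t \<notin> set q" using split_list_last by metis
  have "len w' = len w + len (inv v)" using word_length_coset_minimal_mult[OF K min iv] w'e by simp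
  then have "reduced w' (ra @ rv)"
    using reducedD[OF ra] reducedD[OF rv] w'e by (intro reducedI) (auto simp: word_prod_append_gens)
  then have "block_word J ts ((ra @ p) @ t # q)" using outer w' pq by simp
  moreover have "set q \<subseteq> J" using rvK pq by auto
  ultimately have "ts \<noteq> [] \<and> last ts = t"
    using block_word_last_outside[of J ts "ra @ p" t q] disj by auto
  then show False using chain coxeter_m_self[of t] tS by auto
qed

text \<open>A right descent \<open>y \<notin> J \<union> {t}\<close> of \<open>w\<close> next to a right descent \<open>s \<in> J \<union> {t}\<close> is impossible:
  \<open>ws\<close> would have a reduced word ending in \<open>y\<close>, whereas by induction its reduced words
  end in a letter of \<open>J \<union> {t}\<close>, or (when \<open>s = t\<close> and \<open>ws\<close> drops to \<open>W\<^sub>1 \<cdots> W\<^sub>m\<^sub>-\<^sub>1\<close>) in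
  \<open>t\<^sub>m\<^sub>-\<^sub>1\<close>; but \<open>m(t\<^sub>m\<^sub>-\<^sub>1, t) = \<infinity>\<close>.\<close>

lemma tilde_product_descent_outside:
  assumes J: "J \<subseteq> S" and tS: "set (ts @ [t]) \<subseteq> S" and disj: "set (ts @ [t]) \<inter> J = {}"
    and chain: "ts \<noteq> [] \<Longrightarrow> coxeter_m G (last ts) t = 0"
    and outer: "\<And>w u. tilde_product J ts w \<Longrightarrow> reduced w u \<Longrightarrow> block_word J ts u"
    and P: "tilde_product J (ts @ [t]) w"
    and inner: "\<And>u. tilde_product J (ts @ [t]) (w \<otimes> s) \<Longrightarrow> reduced (w \<otimes> s) u \<Longrightarrow>
       block_word J (ts @ [t]) u"
    and s: "s \<in> J \<union> {t}" and y: "y \<in> S" "y \<notin> J \<union> {t}"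
    and dy: "len (w \<otimes> y) < len w" and ds: "len (w \<otimes> s) < len w"
  shows False
proof -
  have wc: "w \<in> carrier G" using tilde_product_closed[OF P J tS] .
  have sS: "s \<in> S" using s J tS by auto
  have ys: "y \<noteq> s" using s y by auto
  obtain r where r: "reduced (w \<otimes> s) (r @ [y])" using two_right_descents(2)[OF wc y(1) sS ys dy ds] by blast
  consider "tilde_product J (ts @ [t]) (w \<otimes> s)" | "s = t" "tilde_product J ts (w \<otimes> s)"
    using s tilde_product_mult_parabolic[OF J tS P] tilde_product_mult_last[OF J tS P]
    by (auto intro: gen_in_parabolic)
  then show False
  proof cases
    case 1
    then have "block_word J (ts @ [t]) (r @ [y])" using inner r by blast
    then show False using block_word_last_outside[of J "ts @ [t]" r y "[]"] disj y by auto
  next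
    case 2
    then have "block_word J ts (r @ [y])" using outer r by blast
    then have "ts \<noteq> [] \<and> last ts = y" using block_word_last_outside[of J ts r y "[]"] disj y by auto
    then show False using chain two_right_descents(1)[OF wc y(1) sS ys dy ds] 2(1)
      by (auto simp: coxeter_m_def)
  qed
qed

lemma reduced_block_word_snoc:
  assumes J: "J \<subseteq> S" and tS: "set (ts @ [t]) \<subseteq> S" and disj: "set (ts @ [t]) \<inter> J = {}"
    and chain: "ts \<noteq> [] \<Longrightarrow> coxeter_m G (last ts) t = 0"
    and outer: "\<And>w u. tilde_product J ts w \<Longrightarrow> reduced w u \<Longrightarrow> block_word J ts u"
  shows "tilde_product J (ts @ [t]) w \<Longrightarrow> reduced w u \<Longrightarrow> block_word J (ts @ [t]) u"
proof (induction "len w" arbitrary: w u rule: less_induct)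
  case less
  let ?K = "J \<union> {t}"
  have K: "?K \<subseteq> S" using J tS by auto
  obtain a b where a: "coset_minimal ?K a" and b: "b \<in> parabolic G ?K" and wab: "w = a \<otimes> b"
    using coset_minimal_exists[OF K reduced_carrier[OF less(3)]] by blast
  have "b \<noteq> \<one>"
    using tilde_product_not_coset_minimal[OF J tS disj chain outer less(2)] a wab
    by (auto simp: coset_minimal_def)
  then obtain s where s: "s \<in> ?K" and ds: "len (w \<otimes> s) < len w"
    using coset_minimal_descent[OF K a b] wab by blast
  then have "u \<noteq> []" using reducedD[OF less(3)] by auto
  then obtain u' y where uy: "u = u' @ [y]" by (metis rev_exhaust)
  have ru': "reduced (w \<otimes> y) u'" and dy: "len (w \<otimes> y) < len w"
    using reduced_butlast less(3) uy by auto
  have y: "y \<in> S" using reducedD[OF less(3)] uy by auto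
  consider "y \<in> J" | "y = t" | "y \<notin> ?K" by auto
  then show ?case
  proof cases
    case 1
    then have "tilde_product J (ts @ [t]) (w \<otimes> y)"
      using tilde_product_mult_parabolic[OF J tS less(2)] gen_in_parabolic by blast
    then show ?thesis using less(1)[OF dy _ ru'] block_word_snoc_letter 1 uy by blast
  next
    case 2
    then show ?thesis
      using tilde_product_mult_last[OF J tS less(2)] less(1)[OF dy _ ru'] outer[of _ u'] ru'
        block_word_snoc_last block_word_new_block uy by blast
  next
    case 3
    have False
      by (rule tilde_product_descent_outside[of J ts t w s y])
        (use J tS disj chain outer less(2) less(1)[OF ds] s y 3 dy ds in auto)
    then show ?thesis ..
  qed
qed

lemma reduced_block_word:
  assumes J: "J \<subseteq> S"
  shows "set ts \<subseteq> S \<Longrightarrow> set ts \<inter> J = {} \<Longrightarrow> successively (\<lambda>s t. coxeter_m G s t = 0) ts \<Longrightarrow>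
    tilde_product J ts w \<Longrightarrow> reduced w u \<Longrightarrow> block_word J ts u"
proof (induction ts arbitrary: w u rule: rev_induct)
  case Nil
  then show ?case
    using reduced_parabolic_letters[OF J] tilde_product_NilD by (blast intro: block_word_Nil)
next
  case (snoc t ts)
  have "ts \<noteq> [] \<Longrightarrow> coxeter_m G (last ts) t = 0" and "successively (\<lambda>s t. coxeter_m G s t = 0) ts"
    using snoc(4) by (auto simp: successively_append_iff)
  then show ?case using reduced_block_word_snoc[OF J snoc(2,3)] snoc by auto
qed

lemma tilde_product_word_prod:
  assumes J: "J \<subseteq> S"
  shows "set ts \<subseteq> S \<Longrightarrow> list_all2 (\<lambda>v t. v \<in> parabolic G (J \<union> {t}) - parabolic G J) vs ts \<Longrightarrow>
    tilde_product J ts (word_prod G vs)"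
proof (induction ts arbitrary: vs rule: rev_induct)
  case Nil
  then show ?case using subgroup.one_closed[OF subgroup_parabolic[OF J]] by (simp add: tilde_product_Nil)
next
  case (snoc t ts)
  then obtain vs' v where vs: "vs = vs' @ [v]" "list_all2 (\<lambda>v t. v \<in> parabolic G (J \<union> {t}) - parabolic G J) vs' ts"
    and v: "v \<in> parabolic G (J \<union> {t}) - parabolic G J"
    by (auto simp: list_all2_append2 list_all2_Cons2)
  have "set vs' \<subseteq> carrier G"
  proof
    fix x assume "x \<in> set vs'"
    then obtain i where i: "i < length ts" and x: "x \<in> parabolic G (J \<union> {ts ! i})"
      using vs(2) by (auto simp: list_all2_conv_all_nth in_set_conv_nth)
    have "ts ! i \<in> S" using i snoc(2) nth_mem by fastforce
    then show "x \<in> carrier G" using parabolic_closed[of "J \<union> {ts ! i}"] J x by auto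
  qed
  moreover have "v \<in> carrier G" using v parabolic_closed[of "J \<union> {t}"] J snoc(2) by auto
  ultimately have "word_prod G vs = word_prod G vs' \<otimes> v" using vs(1) by (simp add: word_prod_append)
  then show ?case using tilde_product_snoc[OF snoc.IH v] snoc(2) vs(2) by simp
qed

lemma block_word_blocks:
  "block_word J ts u \<Longrightarrow> ts \<noteq> [] \<Longrightarrow>
     \<exists>us. list_all2 (\<lambda>e t. set e \<subseteq> J \<union> {t} \<and> t \<in> set e) us ts \<and> concat us = u"
proof (induction rule: block_word.induct)
  case (block_word_snoc ts u e t)
  show ?case
  proof (cases "ts = []")
    case True
    then have "block_word J [] u" using block_word_snoc(1) by simp
    then have "set u \<subseteq> J" by (cases rule: block_word.cases) auto
    then show ?thesis using True block_word_snoc by (intro exI[of _ "[u @ e]"]) auto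
  next
    case False
    then obtain us where "list_all2 (\<lambda>e t. set e \<subseteq> J \<union> {t} \<and> t \<in> set e) us ts" "concat us = u"
      using block_word_snoc by blast
    then show ?thesis using block_word_snoc by (intro exI[of _ "us @ [e]"]) (simp add: list_all2_appendI)
  qed
qed simp

lemma reduced_infix_not_in_parabolic:
  assumes J: "J \<subseteq> S" and r: "reduced w (a @ e @ c)" and t: "t \<in> set e" "t \<notin> J"
  shows "word_prod G e \<notin> parabolic G J"
  using reduced_parabolic_letters[OF J reduced_infix[OF r]] t by auto

theorem reduced_words_tilde_product:
  assumes J: "J \<subseteq> S" and tS: "set ts \<subseteq> S" and disj: "set ts \<inter> J = {}"
    and chain: "successively (\<lambda>s t. coxeter_m G s t = 0) ts"
    and vs: "list_all2 (\<lambda>v t. v \<in> parabolic G (J \<union> {t}) - parabolic G J) vs ts"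
    and u: "reduced (word_prod G vs) u"
  shows "\<exists>us. list_all2 (\<lambda>e t. word_prod G e \<in> parabolic G (J \<union> {t}) - parabolic G J) us ts \<and>
    concat us = u"
proof (cases "ts = []")
  case True
  then have "u = []" using vs reducedD[OF u] reduced_length_le[OF u, of "[]"] by auto
  then show ?thesis using True by simp
next
  case False
  have "block_word J ts u"
    using reduced_block_word[OF J tS disj chain tilde_product_word_prod[OF J tS vs] u] .
  then obtain us where us: "list_all2 (\<lambda>e t. set e \<subseteq> J \<union> {t} \<and> t \<in> set e) us ts" "concat us = u"
    using block_word_blocks False by blast
  have "word_prod G (us ! i) \<in> parabolic G (J \<union> {ts ! i}) - parabolic G J" if i: "i < length ts" for i
  proof
    have Ki: "J \<union> {ts ! i} \<subseteq> S" using J tS i by auto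
    have e: "set (us ! i) \<subseteq> J \<union> {ts ! i}" "ts ! i \<in> set (us ! i)"
      using us(1) i by (auto simp: list_all2_conv_all_nth)
    then show "word_prod G (us ! i) \<in> parabolic G (J \<union> {ts ! i})" using word_in_parabolic[OF Ki] by blast
    have "i < length us" using us(1) i by (simp add: list_all2_lengthD)
    have "u = concat (take i us @ drop i us)" using us(2) by simp
    also have "drop i us = us ! i # drop (Suc i) us"
      using \<open>i < length us\<close> by (rule Cons_nth_drop_Suc[symmetric])
    finally have "reduced (word_prod G vs) (concat (take i us) @ us ! i @ concat (drop (Suc i) us))"
      using u by simp
    moreover have "ts ! i \<notin> J" using disj nth_mem[OF i] by blast
    ultimately show "word_prod G (us ! i) \<notin> parabolic G J"
      using reduced_infix_not_in_parabolic[OF J _ e(2)] by blast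
  qed
  then show ?thesis using us by (auto simp: list_all2_conv_all_nth)
qed

corollary word_length_tilde_product:
  assumes J: "J \<subseteq> S" and tS: "set ts \<subseteq> S" and disj: "set ts \<inter> J = {}"
    and chain: "successively (\<lambda>s t. coxeter_m G s t = 0) ts"
    and vs: "list_all2 (\<lambda>v t. v \<in> parabolic G (J \<union> {t}) - parabolic G J) vs ts"
  shows "length ts \<le> len (word_prod G vs)"
proof -
  have "word_prod G vs \<in> carrier G"
    using tilde_product_closed[OF tilde_product_word_prod[OF J tS vs] J tS] .
  then obtain u where u: "reduced (word_prod G vs) u" using reduced_exists by blast
  then obtain us where us: "list_all2 (\<lambda>e t. word_prod G e \<in> parabolic G (J \<union> {t}) - parabolic G J) us ts"
    "concat us = u"
    using reduced_words_tilde_product[OF J tS disj chain vs] by blast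
  have "[] \<notin> set us"
    using us(1) subgroup.one_closed[OF subgroup_parabolic[OF J]]
    by (fastforce simp: list_all2_conv_all_nth in_set_conv_nth)
  then have "length us \<le> length u" using length_le_length_concat us(2) by blast
  then show ?thesis using us(1) reducedD[OF u] by (simp add: list_all2_lengthD)
qed

end

theorem mainTheorem8:
  fixes G :: "('a, 'b) monoid_scheme" and S :: "'a set" and ts :: "'a list" and w :: 'a
  assumes cox: "coxeter_system G S"
    and finS: "finite S"
    and tsS: "set ts \<subseteq> S"
    and inf: "\<And>i. 0 < i \<Longrightarrow> i < length ts \<Longrightarrow> coxeter_m G (ts ! (i - 1)) (ts ! i) = 0"
    and wprod: "\<exists>vs. length vs = length ts \<and>
          (\<forall>i < length ts. vs ! i \<in> parabolic G ((S - set ts) \<union> {ts ! i}) - parabolic G (S - set ts))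
          \<and> w = word_prod G vs"
  shows "(\<forall>u. reduced_decomposition G S w u \<longrightarrow>
            (\<exists>us. length us = length ts \<and> concat us = u \<and>
               (\<forall>i < length ts. word_prod G (us ! i) \<in>
                  parabolic G ((S - set ts) \<union> {ts ! i}) - parabolic G (S - set ts))))
         \<and> word_length G S w \<ge> length ts"
proof -
  interpret coxeter G S
    using cox finS by (simp add: coxeter_def coxeter_axioms_def coxeter_system_def)
  let ?J = "S - set ts"
  have J: "?J \<subseteq> S" and disj: "set ts \<inter> ?J = {}" by auto
  have chain: "successively (\<lambda>s t. coxeter_m G s t = 0) ts"
    using inf[of "Suc _"] by (simp add: successively_conv_nth)
  obtain vs where "length vs = length ts" and w: "w = word_prod G vs"
    and "\<forall>i < length ts. vs ! i \<in> parabolic G (?J \<union> {ts ! i}) - parabolic G ?J"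
    using wprod by blast
  then have vs: "list_all2 (\<lambda>v t. v \<in> parabolic G (?J \<union> {t}) - parabolic G ?J) vs ts"
    by (simp add: list_all2_conv_all_nth)
  show ?thesis
  proof (intro conjI allI impI)
    fix u assume "reduced w u"
    then obtain us where "list_all2 (\<lambda>e t. word_prod G e \<in> parabolic G (?J \<union> {t}) - parabolic G ?J) us ts"
      and "concat us = u"
      using reduced_words_tilde_product[OF J tsS disj chain vs] w by blast
    then show "\<exists>us. length us = length ts \<and> concat us = u \<and>
        (\<forall>i < length ts. word_prod G (us ! i) \<in> parabolic G (?J \<union> {ts ! i}) - parabolic G ?J)"
      by (intro exI[of _ us]) (auto simp: list_all2_conv_all_nth)
  qed (use word_length_tilde_product[OF J tsS disj chain vs] w in simp)
qed

end
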